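(* Let $U$ be an infinite-dimensional vector space over a (not necessarily commutative) field $K$ and let $R:=\mathrm{End}_K(U)$. Then the projective line $\mathbb{P}(R)$ is connected and its diameter (with respect to the distant relation) is exactly $3$.
   Context: For a ring $R$ with $1$, a pair $(a,b)\in R^2$ is admissible if it is the first row of some invertible $2\times2$ matrix over $R$. The projective line $\mathbb{P}(R)$ is the set of all cyclic submodules $R(a,b)$ of the left $R$-module $R^2$ with $(a,b)$ admissible. Two points $R(a,b)$, $R(c,d)$ are distant iff $\begin{pmatrix}a&b\\c&d\end{pmatrix}$ is invertible. The distant graph has vertex set $\mathbb{P}(R)$ and edges the pairs of distant points; $\mathbb{P}(R)$ is connected if this graph is connected, the distance between two points is the least number of edges of a path joining them, and the diameter is the supremum of distances between points of $\mathbb{P}(R)$. *)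

theory Defs
  imports "HOL-Algebra.Ring" "HOL-Library.Extended_Nat"
begin

definition left_vector_space :: "('k::division_ring \<Rightarrow> 'u::ab_group_add \<Rightarrow> 'u) \<Rightarrow> bool" where
  "left_vector_space sm \<longleftrightarrow>
     (\<forall>a x y. sm a (x + y) = sm a x + sm a y) \<and>
     (\<forall>a b x. sm (a + b) x = sm a x + sm b x) \<and>
     (\<forall>a b x. sm (a * b) x = sm a (sm b x)) \<and>
     (\<forall>x. sm 1 x = x)"

definition vs_span :: "('k::division_ring \<Rightarrow> 'u::ab_group_add \<Rightarrow> 'u) \<Rightarrow> 'u set \<Rightarrow> 'u set" where
  "vs_span sm S = {x. \<exists>T c. finite T \<and> T \<subseteq> S \<and> x = (\<Sum>v\<in>T. sm (c v) v)}"

definition finite_dimensional_vs :: "('k::division_ring \<Rightarrow> 'u::ab_group_add \<Rightarrow> 'u) \<Rightarrow> bool" where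
  "finite_dimensional_vs sm \<longleftrightarrow> (\<exists>S. finite S \<and> vs_span sm S = UNIV)"

definition vs_linear :: "('k::division_ring \<Rightarrow> 'u::ab_group_add \<Rightarrow> 'u) \<Rightarrow> ('u \<Rightarrow> 'u) \<Rightarrow> bool" where
  "vs_linear sm f \<longleftrightarrow> (\<forall>x y. f (x + y) = f x + f y) \<and> (\<forall>a x. f (sm a x) = sm a (f x))"

text \<open>The endomorphism ring End_K(U), with multiplication being composition
  (maps written on the left: (f g)(x) = f (g x)).\<close>
definition End_ring :: "('k::division_ring \<Rightarrow> 'u::ab_group_add \<Rightarrow> 'u) \<Rightarrow> ('u \<Rightarrow> 'u) ring" where
  "End_ring sm = \<lparr>carrier = {f. vs_linear sm f}, mult = (\<lambda>f g. f \<circ> g), one = id,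
                   zero = (\<lambda>_. 0), add = (\<lambda>f g x. f x + g x)\<rparr>"

definition mat2_invertible :: "('r, 'm) ring_scheme \<Rightarrow> 'r \<Rightarrow> 'r \<Rightarrow> 'r \<Rightarrow> 'r \<Rightarrow> bool" where
  "mat2_invertible R a b c d \<longleftrightarrow>
     a \<in> carrier R \<and> b \<in> carrier R \<and> c \<in> carrier R \<and> d \<in> carrier R \<and>
     (\<exists>e\<in>carrier R. \<exists>f\<in>carrier R. \<exists>g\<in>carrier R. \<exists>h\<in>carrier R.
        a \<otimes>\<^bsub>R\<^esub> e \<oplus>\<^bsub>R\<^esub> b \<otimes>\<^bsub>R\<^esub> g = \<one>\<^bsub>R\<^esub> \<and>
        a \<otimes>\<^bsub>R\<^esub> f \<oplus>\<^bsub>R\<^esub> b \<otimes>\<^bsub>R\<^esub> h = \<zero>\<^bsub>R\<^esub> \<and>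
        c \<otimes>\<^bsub>R\<^esub> e \<oplus>\<^bsub>R\<^esub> d \<otimes>\<^bsub>R\<^esub> g = \<zero>\<^bsub>R\<^esub> \<and>
        c \<otimes>\<^bsub>R\<^esub> f \<oplus>\<^bsub>R\<^esub> d \<otimes>\<^bsub>R\<^esub> h = \<one>\<^bsub>R\<^esub> \<and>
        e \<otimes>\<^bsub>R\<^esub> a \<oplus>\<^bsub>R\<^esub> f \<otimes>\<^bsub>R\<^esub> c = \<one>\<^bsub>R\<^esub> \<and>
        e \<otimes>\<^bsub>R\<^esub> b \<oplus>\<^bsub>R\<^esub> f \<otimes>\<^bsub>R\<^esub> d = \<zero>\<^bsub>R\<^esub> \<and>
        g \<otimes>\<^bsub>R\<^esub> a \<oplus>\<^bsub>R\<^esub> h \<otimes>\<^bsub>R\<^esub> c = \<zero>\<^bsub>R\<^esub> \<and>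
        g \<otimes>\<^bsub>R\<^esub> b \<oplus>\<^bsub>R\<^esub> h \<otimes>\<^bsub>R\<^esub> d = \<one>\<^bsub>R\<^esub>)"

definition admissible :: "('r, 'm) ring_scheme \<Rightarrow> 'r \<Rightarrow> 'r \<Rightarrow> bool" where
  "admissible R a b \<longleftrightarrow> (\<exists>c\<in>carrier R. \<exists>d\<in>carrier R. mat2_invertible R a b c d)"

definition cyc :: "('r, 'm) ring_scheme \<Rightarrow> 'r \<Rightarrow> 'r \<Rightarrow> ('r \<times> 'r) set" where
  "cyc R a b = {(r \<otimes>\<^bsub>R\<^esub> a, r \<otimes>\<^bsub>R\<^esub> b) | r. r \<in> carrier R}"

definition proj_line :: "('r, 'm) ring_scheme \<Rightarrow> ('r \<times> 'r) set set" where
  "proj_line R = {cyc R a b | a b. admissible R a b}"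

definition distant :: "('r, 'm) ring_scheme \<Rightarrow> ('r \<times> 'r) set \<Rightarrow> ('r \<times> 'r) set \<Rightarrow> bool" where
  "distant R p q \<longleftrightarrow>
     (\<exists>a b c d. admissible R a b \<and> admissible R c d \<and>
        p = cyc R a b \<and> q = cyc R c d \<and> mat2_invertible R a b c d)"

definition dpath :: "('r, 'm) ring_scheme \<Rightarrow> ('r \<times> 'r) set \<Rightarrow> ('r \<times> 'r) set \<Rightarrow> nat \<Rightarrow> bool" where
  "dpath R p q n \<longleftrightarrow>
     (\<exists>xs. length xs = Suc n \<and> xs ! 0 = p \<and> xs ! n = q \<and> set xs \<subseteq> proj_line R \<and>
        (\<forall>i<n. distant R (xs ! i) (xs ! Suc i)))"

definition proj_connected :: "('r, 'm) ring_scheme \<Rightarrow> bool" where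
  "proj_connected R \<longleftrightarrow> (\<forall>p\<in>proj_line R. \<forall>q\<in>proj_line R. \<exists>n. dpath R p q n)"

definition proj_distance :: "('r, 'm) ring_scheme \<Rightarrow> ('r \<times> 'r) set \<Rightarrow> ('r \<times> 'r) set \<Rightarrow> enat" where
  "proj_distance R p q = (if \<exists>n. dpath R p q n then enat (LEAST n. dpath R p q n) else \<infinity>)"

definition proj_diameter :: "('r, 'm) ring_scheme \<Rightarrow> enat" where
  "proj_diameter R = (SUP p\<in>proj_line R. SUP q\<in>proj_line R. proj_distance R p q)"

end

theory Submission
  imports Defs "HOL-Library.Product_Plus" "HOL-Library.Set_Algebras"
begin

text \<open>
  A point \<open>R(a, b)\<close> of the projective line over \<open>R = End(U)\<close> is encoded by the kernel of
  \<open>(x, y) \<mapsto> a x + b y\<close> in \<open>U \<times> U\<close>. Two points are distant exactly when their kernels are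
  complementary, and every complement of the kernel of one point is isomorphic to the kernel of any
  other point.

  Let \<open>P\<close> and \<open>Q\<close> be the kernels of two points. By Zorn's lemma there is a linear isomorphism
  between complements of \<open>P \<inter> Q\<close> in \<open>P\<close> and in \<open>Q\<close> that is defined on all of one of them. The
  sums \<open>x + g x\<close> over its graph, enlarged by a complement of \<open>P + Q\<close>, form a complement \<open>Y\<close> of
  \<open>Q\<close> (say) with \<open>Y \<inter> P = 0\<close>. Since \<open>Y\<close> is isomorphic to \<open>P\<close>, the graph of such an isomorphism,
  enlarged by a complement of \<open>P + Y\<close>, is a common complement \<open>X\<close> of \<open>P\<close> and \<open>Y\<close>. The points
  with kernels \<open>X\<close> and \<open>Y\<close> give a path of length 3.

  If \<open>U\<close> is infinite-dimensional, the backward shift along an independent sequence is a surjective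
  endomorphism \<open>a\<close> with nonzero kernel. The points \<open>R(1, 0)\<close> and \<open>R(a, 0)\<close> have the distinct
  nested kernels \<open>0 \<times> U \<subset> ker a \<times> U\<close>; nested distinct subspaces have no common complement, so
  these two points are at distance 3.
\<close>

section \<open>Left vector spaces over a division ring\<close>

definition vs_subspace :: "('k::division_ring \<Rightarrow> 'v::ab_group_add \<Rightarrow> 'v) \<Rightarrow> 'v set \<Rightarrow> bool" where
  "vs_subspace sm A \<longleftrightarrow> 0 \<in> A \<and> (\<forall>x\<in>A. \<forall>y\<in>A. x + y \<in> A) \<and> (\<forall>a. \<forall>x\<in>A. sm a x \<in> A)"

definition vs_complements :: "('k::division_ring \<Rightarrow> 'v::ab_group_add \<Rightarrow> 'v) \<Rightarrow> 'v set \<Rightarrow> 'v set \<Rightarrow> bool" where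
  "vs_complements sm A B \<longleftrightarrow> vs_subspace sm A \<and> vs_subspace sm B \<and> A \<inter> B = {0} \<and> A + B = UNIV"

definition vs_isomorphic :: "('k::division_ring \<Rightarrow> 'v::ab_group_add \<Rightarrow> 'v) \<Rightarrow> 'v set \<Rightarrow> 'v set \<Rightarrow> bool" where
  "vs_isomorphic sm A B \<longleftrightarrow> (\<exists>\<chi>. vs_linear sm \<chi> \<and> inj_on \<chi> A \<and> \<chi> ` A = B)"

definition pair_sm :: "('k::division_ring \<Rightarrow> 'v::ab_group_add \<Rightarrow> 'v) \<Rightarrow> 'k \<Rightarrow> 'v \<times> 'v \<Rightarrow> 'v \<times> 'v" where
  "pair_sm sm a z = (sm a (fst z), sm a (snd z))"

lemma pair_sm_Pair [simp]: "pair_sm sm a (x, y) = (sm a x, sm a y)"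
  by (simp add: pair_sm_def)

lemma fst_pair_sm: "fst (pair_sm sm a z) = sm a (fst z)"
  and snd_pair_sm: "snd (pair_sm sm a z) = sm a (snd z)"
  by (simp_all add: pair_sm_def)

definition vs_partial_iso :: "('k::division_ring \<Rightarrow> 'v::ab_group_add \<Rightarrow> 'v) \<Rightarrow> ('v \<times> 'v) set \<Rightarrow> 'v set \<Rightarrow> 'v set \<Rightarrow> bool" where
  "vs_partial_iso sm G A B \<longleftrightarrow> vs_subspace (pair_sm sm) G \<and> G \<subseteq> A \<times> B \<and>
     (\<forall>y. (0, y) \<in> G \<longrightarrow> y = 0) \<and> (\<forall>x. (x, 0) \<in> G \<longrightarrow> x = 0)"

locale left_vs =
  fixes sm :: "'k::division_ring \<Rightarrow> 'v::ab_group_add \<Rightarrow> 'v"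
  assumes sm_add_right: "sm a (x + y) = sm a x + sm a y"
    and sm_add_left: "sm (a + b) x = sm a x + sm b x"
    and sm_mult: "sm (a * b) x = sm a (sm b x)"
    and sm_one [simp]: "sm 1 x = x"
begin

lemma sm_zero_right [simp]: "sm a 0 = 0"
  using sm_add_right[of a 0 0] by simp

lemma sm_zero_left [simp]: "sm 0 x = 0"
  using sm_add_left[of 0 0 x] by simp

lemma sm_minus_left: "sm (- a) x = - sm a x"
  by (metis add.right_inverse minus_unique sm_add_left sm_zero_left)

lemma sm_inverse_cancel: "a \<noteq> 0 \<Longrightarrow> sm (inverse a) (sm a x) = x"
  by (simp flip: sm_mult)

lemma left_vs_pair: "left_vs (pair_sm sm)"
  by unfold_locales (auto simp: pair_sm_def sm_add_right sm_add_left sm_mult)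

lemma vs_linear_zero: "vs_linear sm f \<Longrightarrow> f 0 = 0"
  unfolding vs_linear_def by (metis add_0 add_cancel_right_right)

lemma vs_linear_add: "vs_linear sm f \<Longrightarrow> f (x + y) = f x + f y"
  by (simp add: vs_linear_def)

lemma vs_linear_scale: "vs_linear sm f \<Longrightarrow> f (sm a x) = sm a (f x)"
  by (simp add: vs_linear_def)

lemma vs_linear_minus: "vs_linear sm f \<Longrightarrow> f (- x) = - f x"
  by (metis add.right_inverse minus_unique vs_linear_add vs_linear_zero)

lemma vs_linear_diff: "vs_linear sm f \<Longrightarrow> f (x - y) = f x - f y"
  using vs_linear_add[of f x "- y"] by (simp add: vs_linear_minus)

lemma vs_linear_id: "vs_linear sm id"
  by (simp add: vs_linear_def)

lemma vs_linear_zero_map: "vs_linear sm (\<lambda>_. 0)"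
  by (simp add: vs_linear_def)

lemma vs_linear_inv:
  assumes f: "vs_linear sm f" and "bij f"
  shows "vs_linear sm (inv_into UNIV f)"
proof -
  have f_inv: "f (inv_into UNIV f y) = y" for y
    using bij_is_surj[OF \<open>bij f\<close>] by (simp add: surj_f_inv_f)
  have inv_f: "inv_into UNIV f (f x) = x" for x
    using bij_is_inj[OF \<open>bij f\<close>] by simp
  show ?thesis
    unfolding vs_linear_def
  proof (intro conjI allI)
    show "inv_into UNIV f (x + y) = inv_into UNIV f x + inv_into UNIV f y" for x y
      using inv_f[of "inv_into UNIV f x + inv_into UNIV f y"] by (simp add: vs_linear_add[OF f] f_inv)
    show "inv_into UNIV f (sm a x) = sm a (inv_into UNIV f x)" for a x
      using inv_f[of "sm a (inv_into UNIV f x)"] by (simp add: vs_linear_scale[OF f] f_inv)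
  qed
qed

lemma vs_subspace_zero: "vs_subspace sm A \<Longrightarrow> 0 \<in> A"
  and vs_subspace_add: "vs_subspace sm A \<Longrightarrow> x \<in> A \<Longrightarrow> y \<in> A \<Longrightarrow> x + y \<in> A"
  and vs_subspace_scale: "vs_subspace sm A \<Longrightarrow> x \<in> A \<Longrightarrow> sm a x \<in> A"
  by (auto simp: vs_subspace_def)

lemma vs_subspace_minus: "vs_subspace sm A \<Longrightarrow> x \<in> A \<Longrightarrow> - x \<in> A"
  by (metis sm_minus_left sm_one vs_subspace_scale)

lemma vs_subspace_diff: "vs_subspace sm A \<Longrightarrow> x \<in> A \<Longrightarrow> y \<in> A \<Longrightarrow> x - y \<in> A"
  by (metis diff_conv_add_uminus vs_subspace_add vs_subspace_minus)

lemma vs_subspace_UNIV: "vs_subspace sm UNIV"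
  by (simp add: vs_subspace_def)

lemma vs_subspace_Int: "vs_subspace sm A \<Longrightarrow> vs_subspace sm B \<Longrightarrow> vs_subspace sm (A \<inter> B)"
  by (simp add: vs_subspace_def)

lemma vs_subspace_set_plus:
  assumes "vs_subspace sm A" "vs_subspace sm B"
  shows "vs_subspace sm (A + B)"
  unfolding vs_subspace_def
proof (intro conjI ballI allI)
  show "0 \<in> A + B"
    using assms by (metis add_0 set_plus_intro vs_subspace_zero)
  show "x + y \<in> A + B" if "x \<in> A + B" "y \<in> A + B" for x y
  proof -
    from that obtain a b a' b' where "a \<in> A" "b \<in> B" "a' \<in> A" "b' \<in> B" "x = a + b" "y = a' + b'"
      by (auto elim!: set_plus_elim)
    then have "x + y = (a + a') + (b + b')" "a + a' \<in> A" "b + b' \<in> B"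
      using assms by (auto simp: algebra_simps intro: vs_subspace_add)
    then show ?thesis by auto
  qed
  show "sm k x \<in> A + B" if "x \<in> A + B" for k x
    using that assms by (auto elim!: set_plus_elim simp: sm_add_right) (meson set_plus_intro vs_subspace_scale)
qed

lemma vs_subspace_line: "vs_subspace sm (range (\<lambda>k. sm k x))"
  unfolding vs_subspace_def
  by (auto simp flip: sm_add_left sm_mult) (metis sm_zero_left rangeI)

lemma vs_subspace_Union_chain:
  assumes "\<C> \<noteq> {}" "\<And>A. A \<in> \<C> \<Longrightarrow> vs_subspace sm A" "\<And>A B. A \<in> \<C> \<Longrightarrow> B \<in> \<C> \<Longrightarrow> A \<subseteq> B \<or> B \<subseteq> A"
  shows "vs_subspace sm (\<Union>\<C>)"
  unfolding vs_subspace_def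
proof (intro conjI ballI allI)
  show "0 \<in> \<Union>\<C>"
    using assms(1,2) vs_subspace_zero by blast
  show "x + y \<in> \<Union>\<C>" if "x \<in> \<Union>\<C>" "y \<in> \<Union>\<C>" for x y
  proof -
    from that obtain A B where "A \<in> \<C>" "B \<in> \<C>" "x \<in> A" "y \<in> B"
      by (meson UnionE)
    with assms(3)[of A B] show ?thesis
      using assms(2) vs_subspace_add by blast
  qed
  show "sm a x \<in> \<Union>\<C>" if "x \<in> \<Union>\<C>" for a x
    using that assms(2) vs_subspace_scale by blast
qed

lemma vs_subspace_image:
  assumes f: "vs_linear sm f" and A: "vs_subspace sm A"
  shows "vs_subspace sm (f ` A)"
  unfolding vs_subspace_def
proof (intro conjI ballI allI)
  show "0 \<in> f ` A"
    using image_eqI[of 0 f 0 A] vs_linear_zero[OF f] vs_subspace_zero[OF A] by simp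
  show "x + y \<in> f ` A" if "x \<in> f ` A" "y \<in> f ` A" for x y
  proof -
    from that obtain a b where "a \<in> A" "b \<in> A" "x = f a" "y = f b"
      by blast
    then show ?thesis
      using image_eqI[of "x + y" f "a + b" A] vs_linear_add[OF f] vs_subspace_add[OF A] by simp
  qed
  show "sm k x \<in> f ` A" if "x \<in> f ` A" for k x
  proof -
    from that obtain a where "a \<in> A" "x = f a"
      by blast
    then show ?thesis
      using image_eqI[of "sm k x" f "sm k a" A] vs_linear_scale[OF f] vs_subspace_scale[OF A] by simp
  qed
qed

lemma vs_subspace_kernel: "vs_linear sm f \<Longrightarrow> vs_subspace sm {x. f x = 0}"
  by (simp add: vs_subspace_def vs_linear_zero vs_linear_add vs_linear_scale)

lemma vs_complements_sym: "vs_complements sm A B \<Longrightarrow> vs_complements sm B A"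
  unfolding vs_complements_def by (auto simp: add.commute)

lemma vs_complements_decomp:
  assumes "vs_complements sm A B"
  obtains a b where "a \<in> A" "b \<in> B" "x = a + b"
  using assms unfolding vs_complements_def by (metis UNIV_I set_plus_elim)

lemma vs_complements_Int: "vs_complements sm A B \<Longrightarrow> x \<in> A \<Longrightarrow> x \<in> B \<Longrightarrow> x = 0"
  unfolding vs_complements_def by blast

lemma vs_subspace_cancel_scale:
  assumes "vs_subspace sm S" "y \<in> S" "y + sm k x \<in> S" "k \<noteq> 0"
  shows "x \<in> S"
proof -
  have "sm k x \<in> S"
    using vs_subspace_diff[OF assms(1,3,2)] by simp
  then show ?thesis
    using vs_subspace_scale[OF assms(1), of "sm k x" "inverse k"] sm_inverse_cancel[OF assms(4)] by simp
qed

lemma vs_subspace_zero_set: "vs_subspace sm {0}"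
  by (simp add: vs_subspace_def)

lemma vs_subspace_fst: "vs_subspace (pair_sm sm) G \<Longrightarrow> vs_subspace sm (fst ` G)"
  and vs_subspace_snd: "vs_subspace (pair_sm sm) G \<Longrightarrow> vs_subspace sm (snd ` G)"
  unfolding vs_subspace_def
  by (auto simp: image_iff pair_sm_def) (metis fst_add fst_zero snd_add snd_zero fst_conv snd_conv)+

lemma vs_subspace_sum_image:
  assumes G: "vs_subspace (pair_sm sm) G"
  shows "vs_subspace sm ((\<lambda>(x, y). x + y) ` G)"
  unfolding vs_subspace_def
proof (intro conjI ballI allI)
  have "(0, 0) \<in> G"
    using G by (simp add: vs_subspace_def zero_prod_def)
  then show "0 \<in> (\<lambda>(x, y). x + y) ` G"
    using image_eqI[of 0 "\<lambda>(x, y). x + y" "(0, 0)" G] by simp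
  show "u + v \<in> (\<lambda>(x, y). x + y) ` G" if "u \<in> (\<lambda>(x, y). x + y) ` G" "v \<in> (\<lambda>(x, y). x + y) ` G" for u v
  proof -
    from that obtain x y x' y' where "(x, y) \<in> G" "(x', y') \<in> G" "u = x + y" "v = x' + y'"
      by auto
    moreover from calculation have "(x + x', y + y') \<in> G"
      using G unfolding vs_subspace_def by (metis add_Pair)
    ultimately show ?thesis
      using image_eqI[of "u + v" "\<lambda>(x, y). x + y" "(x + x', y + y')" G] by (simp add: algebra_simps)
  qed
  show "sm a u \<in> (\<lambda>(x, y). x + y) ` G" if "u \<in> (\<lambda>(x, y). x + y) ` G" for a u
  proof -
    from that obtain x y where "(x, y) \<in> G" "u = x + y"
      by auto
    moreover from calculation have "(sm a x, sm a y) \<in> G"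
      using G unfolding vs_subspace_def by (metis pair_sm_Pair)
    ultimately show ?thesis
      using image_eqI[of "sm a u" "\<lambda>(x, y). x + y" "(sm a x, sm a y)" G] by (simp add: sm_add_right)
  qed
qed

lemma vs_subspace_swap:
  assumes "vs_subspace (pair_sm sm) G"
  shows "vs_subspace (pair_sm sm) (prod.swap ` G)"
  unfolding vs_subspace_def
proof (intro conjI ballI allI)
  have "(0, 0) \<in> G"
    using assms by (simp add: vs_subspace_def zero_prod_def)
  then show "0 \<in> prod.swap ` G"
    by (metis swap_simp image_eqI zero_prod_def)
  show "x + y \<in> prod.swap ` G" if x: "x \<in> prod.swap ` G" and y: "y \<in> prod.swap ` G" for x y
  proof -
    have "prod.swap x \<in> G" "prod.swap y \<in> G"
      using x y by auto
    then have "prod.swap x + prod.swap y \<in> G"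
      using assms unfolding vs_subspace_def by blast
    then show ?thesis
      by (rule image_eqI[rotated]) (simp add: prod_eq_iff)
  qed
  show "pair_sm sm a x \<in> prod.swap ` G" if x: "x \<in> prod.swap ` G" for a x
  proof -
    have "prod.swap x \<in> G"
      using x by auto
    then have "pair_sm sm a (prod.swap x) \<in> G"
      using assms unfolding vs_subspace_def by blast
    then show ?thesis
      by (rule image_eqI[rotated]) (simp add: pair_sm_def)
  qed
qed

lemma vs_subspace_graph:
  assumes "vs_linear sm h" "vs_subspace sm B"
  shows "vs_subspace (pair_sm sm) ((\<lambda>b. (b, h b)) ` B)"
  using assms unfolding vs_subspace_def
  by (simp add: vs_linear_zero vs_linear_add vs_linear_scale zero_prod_def image_iff)

lemma vs_partial_iso_swap: "vs_partial_iso sm G A B \<Longrightarrow> vs_partial_iso sm (prod.swap ` G) B A"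
  unfolding vs_partial_iso_def using vs_subspace_swap by force

lemma set_plus_line_subset: "C \<subseteq> C + range (\<lambda>k. sm k x)"
proof
  fix c assume "c \<in> C"
  then have "c + sm 0 x \<in> C + range (\<lambda>k. sm k x)"
    by (intro set_plus_intro rangeI)
  then show "c \<in> C + range (\<lambda>k. sm k x)"
    by simp
qed

lemma set_plus_line_mem:
  assumes "0 \<in> C"
  shows "x \<in> C + range (\<lambda>k. sm k x)"
proof -
  have "0 + sm 1 x \<in> C + range (\<lambda>k. sm k x)"
    using assms by (intro set_plus_intro rangeI)
  then show ?thesis
    by simp
qed

lemma Int_set_plus_line:
  assumes A: "vs_subspace sm A" and C: "vs_subspace sm C" and AC: "A \<inter> C = {0}" and x: "x \<notin> A + C"
  shows "A \<inter> (C + range (\<lambda>k. sm k x)) = {0}"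
proof -
  have "a = 0" if a: "a \<in> A" "a \<in> C + range (\<lambda>k. sm k x)" for a
  proof -
    obtain c k where c: "c \<in> C" "a = c + sm k x"
      using a(2) by (auto elim!: set_plus_elim)
    have "k = 0"
    proof (rule ccontr)
      assume "k \<noteq> 0"
      have "0 + c \<in> A + C" "a + 0 \<in> A + C"
        by (rule set_plus_intro[OF vs_subspace_zero[OF A] c(1)], rule set_plus_intro[OF a(1) vs_subspace_zero[OF C]])
      then have "c \<in> A + C" "c + sm k x \<in> A + C"
        using c(2) by simp_all
      then have "x \<in> A + C"
        using vs_subspace_cancel_scale[OF vs_subspace_set_plus[OF A C]] \<open>k \<noteq> 0\<close> by blast
      with x show False ..
    qed
    then show "a = 0"
      using a(1) c AC by auto
  qed
  moreover have "0 \<in> C + range (\<lambda>k. sm k x)"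
    using set_plus_line_subset vs_subspace_zero[OF C] by blast
  ultimately show ?thesis
    using vs_subspace_zero[OF A] by blast
qed

lemma relative_complement_exists:
  assumes A: "vs_subspace sm A" and B: "vs_subspace sm B" and "A \<subseteq> B"
  obtains C where "vs_subspace sm C" "C \<subseteq> B" "A \<inter> C = {0}" "A + C = B"
proof -
  let ?F = "{C. vs_subspace sm C \<and> C \<subseteq> B \<and> A \<inter> C = {0}}"
  have "\<exists>C\<in>?F. \<forall>X\<in>?F. C \<subseteq> X \<longrightarrow> X = C"
  proof (rule subset_Zorn_nonempty)
    have "{0} \<in> ?F"
      using vs_subspace_zero_set vs_subspace_zero[OF A] vs_subspace_zero[OF B] by auto
    then show "?F \<noteq> {}"
      by blast
    show "\<Union>\<C> \<in> ?F" if "\<C> \<noteq> {}" "subset.chain ?F \<C>" for \<C>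
    proof -
      have "\<C> \<subseteq> ?F" "\<And>X Y. X \<in> \<C> \<Longrightarrow> Y \<in> \<C> \<Longrightarrow> X \<subseteq> Y \<or> Y \<subseteq> X"
        using that(2) unfolding subset_chain_def by blast+
      then have "vs_subspace sm (\<Union>\<C>)"
        using vs_subspace_Union_chain[OF that(1)] by blast
      moreover have "\<Union>\<C> \<subseteq> B" "A \<inter> \<Union>\<C> = {0}"
        using \<open>\<C> \<subseteq> ?F\<close> that(1) vs_subspace_zero[OF A] by blast+
      ultimately show ?thesis
        by blast
    qed
  qed
  then obtain C where C: "vs_subspace sm C" "C \<subseteq> B" "A \<inter> C = {0}"
    and max: "\<And>X. X \<in> ?F \<Longrightarrow> C \<subseteq> X \<Longrightarrow> X = C"
    by auto
  have "B \<subseteq> A + C"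
  proof
    fix x assume "x \<in> B"
    show "x \<in> A + C"
    proof (rule ccontr)
      assume x: "x \<notin> A + C"
      have "C + range (\<lambda>k. sm k x) \<subseteq> B"
        using C(2) \<open>x \<in> B\<close> by (auto elim!: set_plus_elim intro: vs_subspace_add[OF B] vs_subspace_scale[OF B])
      then have "C + range (\<lambda>k. sm k x) \<in> ?F"
        using vs_subspace_set_plus[OF C(1) vs_subspace_line] Int_set_plus_line[OF A C(1,3) x] by simp
      then have "C + range (\<lambda>k. sm k x) = C"
        using set_plus_line_subset by (rule max)
      then have "x \<in> C"
        using set_plus_line_mem[OF vs_subspace_zero[OF C(1)], of x] by simp
      then show False
        using x set_plus_intro[OF vs_subspace_zero[OF A], of x C] by simp
    qed
  qed
  moreover have "A + C \<subseteq> B"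
    using \<open>A \<subseteq> B\<close> C(2) by (auto elim!: set_plus_elim intro: vs_subspace_add[OF B])
  ultimately show thesis
    using that C by blast
qed

lemma complement_exists:
  assumes "vs_subspace sm A"
  obtains B where "vs_complements sm A B"
  using relative_complement_exists[OF assms vs_subspace_UNIV] unfolding vs_complements_def
  by (metis assms subset_UNIV)

lemma vs_partial_iso_extend:
  assumes G: "vs_partial_iso sm G A B" and A: "vs_subspace sm A" and B: "vs_subspace sm B"
    and x: "x \<in> A" "x \<notin> fst ` G" and y: "y \<in> B" "y \<notin> snd ` G"
  shows "vs_partial_iso sm (G + range (\<lambda>k. pair_sm sm k (x, y))) A B"
proof -
  interpret pair: left_vs "pair_sm sm"
    by (rule left_vs_pair)
  have G_sub: "vs_subspace (pair_sm sm) G" and G_AB: "G \<subseteq> A \<times> B"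
    and G_inj: "\<And>y. (0, y) \<in> G \<Longrightarrow> y = 0" "\<And>x. (x, 0) \<in> G \<Longrightarrow> x = 0"
    using G by (auto simp: vs_partial_iso_def)
  define G' where "G' = G + range (\<lambda>k. pair_sm sm k (x, y))"
  have G'_elem: "\<exists>g1 g2 k. (g1, g2) \<in> G \<and> z = (g1 + sm k x, g2 + sm k y)" if z: "z \<in> G'" for z
    using z unfolding G'_def by (auto elim!: set_plus_elim) blast
  have no_x: "k = 0" if "(g1, g2) \<in> G" "g1 + sm k x = 0" for g1 g2 k
    using that x(2) vs_subspace_cancel_scale[OF vs_subspace_fst[OF G_sub], of g1 k x]
      vs_subspace_zero[OF vs_subspace_fst[OF G_sub]] by force
  have no_y: "k = 0" if "(g1, g2) \<in> G" "g2 + sm k y = 0" for g1 g2 k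
    using that y(2) vs_subspace_cancel_scale[OF vs_subspace_snd[OF G_sub], of g2 k y]
      vs_subspace_zero[OF vs_subspace_snd[OF G_sub]] by force
  have "vs_partial_iso sm G' A B"
    unfolding vs_partial_iso_def
  proof (intro conjI allI impI)
    show "vs_subspace (pair_sm sm) G'"
      unfolding G'_def by (rule pair.vs_subspace_set_plus[OF G_sub pair.vs_subspace_line])
    show "G' \<subseteq> A \<times> B"
      using G'_elem G_AB x(1) y(1) by (fastforce intro: vs_subspace_add[OF A] vs_subspace_add[OF B]
          vs_subspace_scale[OF A] vs_subspace_scale[OF B])
    show "v = 0" if "(0, v) \<in> G'" for v
      using G'_elem[OF that] no_x G_inj(1) by force
    show "u = 0" if "(u, 0) \<in> G'" for u
      using G'_elem[OF that] no_y G_inj(2) by force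
  qed
  then show ?thesis
    unfolding G'_def .
qed

lemma vs_partial_iso_Union_chain:
  assumes "\<C> \<noteq> {}" "\<And>G. G \<in> \<C> \<Longrightarrow> vs_partial_iso sm G A B"
    "\<And>G H. G \<in> \<C> \<Longrightarrow> H \<in> \<C> \<Longrightarrow> G \<subseteq> H \<or> H \<subseteq> G"
  shows "vs_partial_iso sm (\<Union>\<C>) A B"
proof -
  interpret pair: left_vs "pair_sm sm"
    by (rule left_vs_pair)
  have "vs_subspace (pair_sm sm) (\<Union>\<C>)"
    using pair.vs_subspace_Union_chain[OF assms(1) _ assms(3)] assms(2) by (auto simp: vs_partial_iso_def)
  then show ?thesis
    using assms(2) unfolding vs_partial_iso_def by blast
qed

lemma comparable_subspaces:
  assumes A: "vs_subspace sm A" and B: "vs_subspace sm B"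
  obtains G where "vs_partial_iso sm G A B" "fst ` G = A \<or> snd ` G = B"
proof -
  interpret pair: left_vs "pair_sm sm"
    by (rule left_vs_pair)
  let ?F = "{G. vs_partial_iso sm G A B}"
  have "\<exists>G\<in>?F. \<forall>X\<in>?F. G \<subseteq> X \<longrightarrow> X = G"
  proof (rule subset_Zorn_nonempty)
    have "{0} \<in> ?F"
      using pair.vs_subspace_zero_set vs_subspace_zero[OF A] vs_subspace_zero[OF B]
      by (auto simp: vs_partial_iso_def zero_prod_def)
    then show "?F \<noteq> {}"
      by blast
    show "\<Union>\<C> \<in> ?F" if "\<C> \<noteq> {}" "subset.chain ?F \<C>" for \<C>
    proof -
      have "\<And>G. G \<in> \<C> \<Longrightarrow> vs_partial_iso sm G A B" "\<And>G H. G \<in> \<C> \<Longrightarrow> H \<in> \<C> \<Longrightarrow> G \<subseteq> H \<or> H \<subseteq> G"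
        using that(2) unfolding subset_chain_def by blast+
      then have "vs_partial_iso sm (\<Union>\<C>) A B"
        by (rule vs_partial_iso_Union_chain[OF that(1)])
      then show ?thesis
        by simp
    qed
  qed
  then obtain G where G: "vs_partial_iso sm G A B"
    and max: "\<And>X. vs_partial_iso sm X A B \<Longrightarrow> G \<subseteq> X \<Longrightarrow> X = G"
    by auto
  have "fst ` G = A \<or> snd ` G = B"
  proof (rule ccontr)
    assume "\<not> ?thesis"
    moreover have "fst ` G \<subseteq> A" "snd ` G \<subseteq> B"
      using G by (auto simp: vs_partial_iso_def)
    ultimately obtain x y where x: "x \<in> A" "x \<notin> fst ` G" and y: "y \<in> B" "y \<notin> snd ` G"
      by blast
    have "G + range (\<lambda>k. pair_sm sm k (x, y)) = G"
      using vs_partial_iso_extend[OF G A B x y] pair.set_plus_line_subset by (rule max)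
    moreover have "0 \<in> G"
      using G pair.vs_subspace_zero by (auto simp: vs_partial_iso_def)
    then have "(x, y) \<in> G + range (\<lambda>k. pair_sm sm k (x, y))"
      by (rule pair.set_plus_line_mem)
    ultimately have "(x, y) \<in> G"
      by simp
    with x(2) show False
      by force
  qed
  with G that show thesis
    by blast
qed

lemma vs_linear_of_graph:
  assumes G: "vs_subspace (pair_sm sm) G"
    and functional: "\<And>y. (0, y) \<in> G \<Longrightarrow> y = 0" and total: "\<And>x. \<exists>y. (x, y) \<in> G"
  obtains f where "vs_linear sm f" "\<And>x y. (x, y) \<in> G \<longleftrightarrow> y = f x"
proof -
  interpret pair: left_vs "pair_sm sm"
    by (rule left_vs_pair)
  have unique: "y = y'" if "(x, y) \<in> G" "(x, y') \<in> G" for x y y'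
    using functional pair.vs_subspace_diff[OF G that] by force
  define f where "f x = (THE y. (x, y) \<in> G)" for x
  have graph: "(x, y) \<in> G \<longleftrightarrow> y = f x" for x y
    unfolding f_def using total unique by (metis theI)
  have "vs_linear sm f"
    unfolding vs_linear_def
  proof (intro conjI allI)
    show "f (x + y) = f x + f y" for x y
      using pair.vs_subspace_add[OF G, of "(x, f x)" "(y, f y)"] graph by simp
    show "f (sm a x) = sm a (f x)" for a x
      using pair.vs_subspace_scale[OF G, of "(x, f x)" a] graph by simp
  qed
  with graph that show thesis
    by blast
qed

lemma vs_linear_extension:
  assumes AB: "vs_complements sm A B"
    and G: "vs_subspace (pair_sm sm) G" "fst ` G = A" "\<And>y. (0, y) \<in> G \<Longrightarrow> y = 0"
    and h: "vs_linear sm h"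
  obtains f where "vs_linear sm f" "\<And>x y. (x, y) \<in> G \<Longrightarrow> f x = y" "\<And>x. x \<in> B \<Longrightarrow> f x = h x"
proof -
  interpret pair: left_vs "pair_sm sm"
    by (rule left_vs_pair)
  define H where "H = G + (\<lambda>b. (b, h b)) ` B"
  have B: "vs_subspace sm B"
    using AB by (simp add: vs_complements_def)
  have "vs_subspace (pair_sm sm) H"
    unfolding H_def using pair.vs_subspace_set_plus[OF G(1) vs_subspace_graph[OF h B]] .
  moreover have "y = 0" if "(0, y) \<in> H" for y
  proof -
    obtain g1 g2 b where g: "(g1, g2) \<in> G" "b \<in> B" "g1 + b = 0" "y = g2 + h b"
      using \<open>(0, y) \<in> H\<close> unfolding H_def by (auto elim!: set_plus_elim)
    have "g1 \<in> A"
      using g(1) G(2) by force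
    moreover have "g1 = - b"
      using g(3) by (simp add: eq_neg_iff_add_eq_0)
    ultimately have "b = 0"
      using vs_complements_Int[OF AB] g(2) vs_subspace_minus[OF B] by force
    then show "y = 0"
      using g G(3) vs_linear_zero[OF h] by simp
  qed
  moreover have "\<exists>y. (x, y) \<in> H" for x
  proof -
    obtain a b where "a \<in> A" "b \<in> B" "x = a + b"
      using vs_complements_decomp[OF AB] .
    moreover obtain y where "(a, y) \<in> G"
      using \<open>a \<in> A\<close> G(2) by force
    ultimately have "(a, y) + (b, h b) \<in> H"
      unfolding H_def by (intro set_plus_intro) auto
    then show ?thesis
      using \<open>x = a + b\<close> by auto
  qed
  ultimately obtain f where f: "vs_linear sm f" "\<And>x y. (x, y) \<in> H \<longleftrightarrow> y = f x"
    using vs_linear_of_graph by blast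
  have "f x = y" if "(x, y) \<in> G" for x y
  proof -
    have "(x, y) + (0, h 0) \<in> H"
      unfolding H_def using that vs_subspace_zero[OF B] by (intro set_plus_intro) auto
    then show ?thesis
      using f(2) vs_linear_zero[OF h] by simp
  qed
  moreover have "f b = h b" if "b \<in> B" for b
  proof -
    have "(0, 0) + (b, h b) \<in> H"
      unfolding H_def using that pair.vs_subspace_zero[OF G(1)] by (intro set_plus_intro) (auto simp: zero_prod_def)
    then show ?thesis
      using f(2) by simp
  qed
  ultimately show thesis
    using f(1) that by blast
qed

lemma vs_projection_exists:
  assumes KX: "vs_complements sm K X"
  obtains \<pi> where "vs_linear sm \<pi>" "\<And>k. k \<in> K \<Longrightarrow> \<pi> k = k" "\<And>x. x \<in> X \<Longrightarrow> \<pi> x = 0"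
    "\<And>z. \<pi> z \<in> K" "\<And>z. z - \<pi> z \<in> X"
proof -
  have K: "vs_subspace sm K"
    using KX by (simp add: vs_complements_def)
  have "fst ` (\<lambda>k. (k, id k)) ` K = K"
    by (simp add: image_image)
  moreover have "\<And>y. (0, y) \<in> (\<lambda>k. (k, id k)) ` K \<Longrightarrow> y = 0"
    by auto
  ultimately obtain \<pi> where \<pi>: "vs_linear sm \<pi>" "\<And>x y. (x, y) \<in> (\<lambda>k. (k, id k)) ` K \<Longrightarrow> \<pi> x = y"
      "\<And>x. x \<in> X \<Longrightarrow> \<pi> x = (\<lambda>_. 0) x"
    using vs_linear_extension[OF KX vs_subspace_graph[OF vs_linear_id K] _ _ vs_linear_zero_map] by blast
  have \<pi>_K: "\<pi> k = k" if "k \<in> K" for k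
    using \<pi>(2)[of k k] that by auto
  have "\<pi> z \<in> K \<and> z - \<pi> z \<in> X" for z
  proof -
    obtain k x where "k \<in> K" "x \<in> X" "z = k + x"
      using vs_complements_decomp[OF KX] .
    then show ?thesis
      using vs_linear_add[OF \<pi>(1)] \<pi>_K \<pi>(3) by simp
  qed
  with \<pi>(1,3) \<pi>_K that show thesis
    by simp
qed

lemma vs_linear_right_inverse:
  assumes f: "vs_linear sm f" and "surj f"
  obtains g where "vs_linear sm g" "\<And>y. f (g y) = y"
proof -
  obtain C where KC: "vs_complements sm {x. f x = 0} C"
    using complement_exists[OF vs_subspace_kernel[OF f]] .
  have C: "vs_subspace sm C"
    using KC by (simp add: vs_complements_def)
  define G where "G = prod.swap ` (\<lambda>c. (c, f c)) ` C"
  have "vs_subspace (pair_sm sm) G"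
    unfolding G_def by (intro vs_subspace_swap vs_subspace_graph f C)
  moreover have "c = 0" if "(0, c) \<in> G" for c
    using that vs_complements_Int[OF KC, of c] unfolding G_def by force
  moreover have "\<exists>c. (y, c) \<in> G" for y
  proof -
    obtain x where "y = f x"
      using \<open>surj f\<close> by blast
    moreover obtain k c where "f k = 0" "c \<in> C" "x = k + c"
      using vs_complements_decomp[OF KC] by blast
    ultimately have "y = f c"
      using vs_linear_add[OF f] by simp
    then show ?thesis
      using \<open>c \<in> C\<close> unfolding G_def by force
  qed
  ultimately obtain g where g: "vs_linear sm g" "\<And>y c. (y, c) \<in> G \<longleftrightarrow> c = g y"
    using vs_linear_of_graph by blast
  have "f (g y) = y" for y
    using g(2)[of y "g y"] unfolding G_def by force
  with g(1) that show thesis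
    by blast
qed

lemma complement_Int_extend:
  assumes MW: "vs_complements sm M W" and S: "vs_subspace sm S" and P: "vs_subspace sm P"
    and "S \<subseteq> M" "P \<subseteq> M" "S \<inter> P = {0}"
  shows "(W + S) \<inter> P = {0}"
proof -
  have M: "vs_subspace sm M" and W: "vs_subspace sm W"
    using MW by (simp_all add: vs_complements_def)
  have "v = 0" if "v \<in> W + S" "v \<in> P" for v
  proof -
    obtain w s where ws: "w \<in> W" "s \<in> S" "v = w + s"
      using \<open>v \<in> W + S\<close> by (rule set_plus_elim)
    have "w = v - s"
      using ws(3) by simp
    moreover have "v - s \<in> M"
      using vs_subspace_diff[OF M] \<open>v \<in> P\<close> ws(2) assms(4,5) by blast
    ultimately have "w = 0"
      using vs_complements_Int[OF MW] ws(1) by blast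
    then show "v = 0"
      using ws \<open>v \<in> P\<close> assms(6) by auto
  qed
  moreover have "0 + 0 \<in> W + S"
    by (rule set_plus_intro[OF vs_subspace_zero[OF W] vs_subspace_zero[OF S]])
  ultimately show ?thesis
    using vs_subspace_zero[OF P] by auto
qed

lemma complement_extend:
  assumes MW: "vs_complements sm M W" and S: "vs_subspace sm S" and P: "vs_subspace sm P"
    and "S \<subseteq> M" "P \<subseteq> M" "S \<inter> P = {0}" "S + P = M"
  shows "vs_complements sm (W + S) P"
proof -
  have "t \<in> W + S + P" for t
  proof -
    obtain m w where "m \<in> M" "w \<in> W" "t = m + w"
      using vs_complements_decomp[OF MW] .
    moreover obtain s p where "s \<in> S" "p \<in> P" "m = s + p"
      using \<open>m \<in> M\<close> \<open>S + P = M\<close> by (auto elim: set_plus_elim)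
    ultimately have "t = (w + s) + p" "w + s \<in> W + S"
      by (simp_all add: algebra_simps set_plus_intro)
    then show ?thesis
      using \<open>p \<in> P\<close> by (simp add: set_plus_intro)
  qed
  then show ?thesis
    using complement_Int_extend[OF assms(1-6)] MW S P
    unfolding vs_complements_def by (auto intro: vs_subspace_set_plus)
qed

lemma graph_complement_within:
  assumes P: "vs_subspace sm P" and Y: "vs_subspace sm Y" and YP: "Y \<inter> P = {0}"
    and \<chi>: "vs_linear sm \<chi>" "\<chi> ` Y \<subseteq> P"
  shows "(\<lambda>y. y + \<chi> y) ` Y \<inter> P = {0}" "(\<lambda>y. y + \<chi> y) ` Y + P = P + Y"
proof -
  have y0: "y = 0" if "y \<in> Y" "y + \<chi> y \<in> P" for y
    using vs_subspace_diff[OF P that(2), of "\<chi> y"] \<chi>(2) that(1) YP by auto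
  have "v = 0" if v: "v \<in> (\<lambda>y. y + \<chi> y) ` Y" "v \<in> P" for v
  proof -
    obtain y where y: "y \<in> Y" "v = y + \<chi> y"
      using v(1) by blast
    then have "y = 0"
      using y0[OF y(1)] v(2) by simp
    then show "v = 0"
      using y(2) vs_linear_zero[OF \<chi>(1)] by simp
  qed
  moreover have "0 \<in> (\<lambda>y. y + \<chi> y) ` Y"
    using image_eqI[of 0 "\<lambda>y. y + \<chi> y" 0 Y] vs_linear_zero[OF \<chi>(1)] vs_subspace_zero[OF Y] by simp
  ultimately show "(\<lambda>y. y + \<chi> y) ` Y \<inter> P = {0}"
    using vs_subspace_zero[OF P] by blast
  show "(\<lambda>y. y + \<chi> y) ` Y + P = P + Y"
  proof (intro equalityI subsetI)
    fix t assume "t \<in> (\<lambda>y. y + \<chi> y) ` Y + P"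
    then obtain y p where "y \<in> Y" "p \<in> P" "t = (\<chi> y + p) + y"
      by (auto elim!: set_plus_elim simp: algebra_simps)
    moreover have "\<chi> y + p \<in> P"
      using vs_subspace_add[OF P] \<chi>(2) \<open>y \<in> Y\<close> \<open>p \<in> P\<close> by blast
    ultimately show "t \<in> P + Y"
      by (simp add: set_plus_intro)
  next
    fix t assume "t \<in> P + Y"
    then obtain p y where "p \<in> P" "y \<in> Y" "t = (y + \<chi> y) + (p - \<chi> y)"
      by (auto elim!: set_plus_elim simp: algebra_simps)
    moreover have "p - \<chi> y \<in> P"
      using vs_subspace_diff[OF P] \<chi>(2) \<open>y \<in> Y\<close> \<open>p \<in> P\<close> by blast
    ultimately show "t \<in> (\<lambda>y. y + \<chi> y) ` Y + P"
      using set_plus_intro[OF imageI[of y Y "\<lambda>y. y + \<chi> y"], of "p - \<chi> y" P] by simp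
  qed
qed

lemma graph_complement_within_iso:
  assumes P: "vs_subspace sm P" and Y: "vs_subspace sm Y" and YP: "Y \<inter> P = {0}"
    and \<chi>: "vs_linear sm \<chi>" "inj_on \<chi> Y" "\<chi> ` Y = P"
  shows "(\<lambda>y. y + \<chi> y) ` Y \<inter> Y = {0}" "(\<lambda>y. y + \<chi> y) ` Y + Y = P + Y"
proof -
  have "v = 0" if v: "v \<in> (\<lambda>y. y + \<chi> y) ` Y" "v \<in> Y" for v
  proof -
    obtain y where y: "y \<in> Y" "v = y + \<chi> y"
      using v(1) by blast
    then have "\<chi> y \<in> Y \<inter> P"
      using vs_subspace_diff[OF Y v(2) y(1)] \<chi>(3) by auto
    then have "\<chi> y = \<chi> 0"
      using YP vs_linear_zero[OF \<chi>(1)] by simp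
    then have "y = 0"
      using inj_onD[OF \<chi>(2)] y(1) vs_subspace_zero[OF Y] by blast
    then show "v = 0"
      using y(2) vs_linear_zero[OF \<chi>(1)] by simp
  qed
  moreover have "0 \<in> (\<lambda>y. y + \<chi> y) ` Y"
    using image_eqI[of 0 "\<lambda>y. y + \<chi> y" 0 Y] vs_linear_zero[OF \<chi>(1)] vs_subspace_zero[OF Y] by simp
  ultimately show "(\<lambda>y. y + \<chi> y) ` Y \<inter> Y = {0}"
    using vs_subspace_zero[OF Y] by blast
  show "(\<lambda>y. y + \<chi> y) ` Y + Y = P + Y"
  proof (intro equalityI subsetI)
    fix t assume "t \<in> (\<lambda>y. y + \<chi> y) ` Y + Y"
    then obtain y y' where "y \<in> Y" "y' \<in> Y" "t = \<chi> y + (y + y')"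
      by (auto elim!: set_plus_elim simp: algebra_simps)
    moreover have "\<chi> y \<in> P" "y + y' \<in> Y"
      using vs_subspace_add[OF Y] \<chi>(3) \<open>y \<in> Y\<close> \<open>y' \<in> Y\<close> by blast+
    ultimately show "t \<in> P + Y"
      by (simp add: set_plus_intro)
  next
    fix t assume "t \<in> P + Y"
    then obtain y0 y where "y0 \<in> Y" "y \<in> Y" "t = \<chi> y0 + y"
      using \<chi>(3) by (auto elim!: set_plus_elim)
    moreover have "y - y0 \<in> Y"
      using vs_subspace_diff[OF Y] \<open>y0 \<in> Y\<close> \<open>y \<in> Y\<close> by blast
    ultimately show "t \<in> (\<lambda>y. y + \<chi> y) ` Y + Y"
      using set_plus_intro[OF imageI[of y0 Y "\<lambda>y. y + \<chi> y"], of "y - y0" Y] by (simp add: algebra_simps)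
  qed
qed

lemma common_complement:
  assumes P: "vs_subspace sm P" and Y: "vs_subspace sm Y" and YP: "Y \<inter> P = {0}"
    and "vs_isomorphic sm Y P"
  obtains X where "vs_complements sm X P" "vs_complements sm X Y"
proof -
  obtain \<chi> where \<chi>: "vs_linear sm \<chi>" "inj_on \<chi> Y" "\<chi> ` Y = P"
    using \<open>vs_isomorphic sm Y P\<close> unfolding vs_isomorphic_def by blast
  define S where "S = (\<lambda>y. y + \<chi> y) ` Y"
  have S: "vs_subspace sm S"
    unfolding S_def using \<chi>(1) Y by (intro vs_subspace_image) (simp_all add: vs_linear_def sm_add_right algebra_simps)
  obtain Z where PYZ: "vs_complements sm (P + Y) Z"
    using complement_exists[OF vs_subspace_set_plus[OF P Y]] .
  have in_PY: "P \<subseteq> P + Y" "Y \<subseteq> P + Y"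
    using set_zero_plus2[OF vs_subspace_zero[OF Y], of P] set_zero_plus2[OF vs_subspace_zero[OF P], of Y]
    by (simp_all add: add.commute)
  have "S \<subseteq> P + Y"
  proof
    fix v assume "v \<in> S"
    then obtain y where "y \<in> Y" "v = \<chi> y + y"
      unfolding S_def by (auto simp: add.commute)
    then show "v \<in> P + Y"
      using \<chi>(3) by (auto intro: set_plus_intro)
  qed
  have "S \<inter> P = {0}" "S + P = P + Y"
    unfolding S_def using graph_complement_within[OF P Y YP \<chi>(1)] \<chi>(3) by simp_all
  then have "vs_complements sm (Z + S) P"
    using complement_extend[OF PYZ S P \<open>S \<subseteq> P + Y\<close> in_PY(1)] by blast
  moreover have "S \<inter> Y = {0}" "S + Y = P + Y"
    unfolding S_def using graph_complement_within_iso[OF P Y YP \<chi>] by simp_all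
  then have "vs_complements sm (Z + S) Y"
    using complement_extend[OF PYZ S Y \<open>S \<subseteq> P + Y\<close> in_PY(2)] by blast
  ultimately show thesis
    by (rule that)
qed

lemma sum_graph_Int_eq_zero:
  assumes G: "vs_partial_iso sm G P1 Q1" and "P1 \<inter> Q = {0}" "Q1 \<subseteq> Q" and Q: "vs_subspace sm Q"
  shows "(\<lambda>(x, y). x + y) ` G \<inter> Q = {0}"
proof -
  have G_PQ: "x \<in> P1" "y \<in> Q1" if "(x, y) \<in> G" for x y
    using that G by (auto simp: vs_partial_iso_def)
  have "x + y = 0" if xy: "(x, y) \<in> G" "x + y \<in> Q" for x y
  proof -
    have "x \<in> Q"
      using vs_subspace_diff[OF Q xy(2), of y] G_PQ[OF xy(1)] \<open>Q1 \<subseteq> Q\<close> by auto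
    then have "x = 0"
      using G_PQ[OF xy(1)] \<open>P1 \<inter> Q = {0}\<close> by blast
    then show "x + y = 0"
      using G xy(1) by (simp add: vs_partial_iso_def)
  qed
  moreover have "(0, 0) \<in> G"
    using G by (simp add: vs_partial_iso_def vs_subspace_def zero_prod_def)
  ultimately show ?thesis
    using vs_subspace_zero[OF Q] by force
qed

lemma sum_graph_plus:
  assumes P: "vs_subspace sm P" and Q: "vs_subspace sm Q"
    and G: "vs_partial_iso sm G P1 Q1" "fst ` G = P1"
    and "P1 \<subseteq> P" "(P \<inter> Q) + P1 = P" "Q1 \<subseteq> Q"
  shows "(\<lambda>(x, y). x + y) ` G + Q = P + Q"
proof (intro equalityI subsetI)
  have G_PQ: "x \<in> P" "y \<in> Q" if "(x, y) \<in> G" for x y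
    using that G(1) assms(5,7) by (auto simp: vs_partial_iso_def)
  fix t
  show "t \<in> P + Q" if t: "t \<in> (\<lambda>(x, y). x + y) ` G + Q"
  proof -
    obtain x y q where "(x, y) \<in> G" "q \<in> Q" "t = x + (y + q)"
      using t by (auto elim!: set_plus_elim simp: algebra_simps)
    then show ?thesis
      using G_PQ vs_subspace_add[OF Q] by (simp add: set_plus_intro)
  qed
  show "t \<in> (\<lambda>(x, y). x + y) ` G + Q" if t: "t \<in> P + Q"
  proof -
    obtain p q where "p \<in> P" "q \<in> Q" "t = p + q"
      using t by (rule set_plus_elim)
    moreover have "p \<in> (P \<inter> Q) + P1"
      using \<open>p \<in> P\<close> \<open>(P \<inter> Q) + P1 = P\<close> by simp
    then obtain i p1 where "i \<in> P \<inter> Q" "p1 \<in> P1" "p = i + p1"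
      by (rule set_plus_elim)
    moreover obtain y where "(p1, y) \<in> G"
      using \<open>p1 \<in> P1\<close> G(2) by force
    ultimately have "t = (p1 + y) + (i + q - y)" "i + q - y \<in> Q"
      using G_PQ vs_subspace_add[OF Q] vs_subspace_diff[OF Q] by (auto simp: algebra_simps)
    then show ?thesis
      using set_plus_intro[OF imageI[OF \<open>(p1, y) \<in> G\<close>, of "\<lambda>(x, y). x + y"], of "i + q - y" Q]
      by (simp add: algebra_simps)
  qed
qed

lemma complement_from_partial_iso:
  assumes P: "vs_subspace sm P" and Q: "vs_subspace sm Q"
    and P1: "P1 \<subseteq> P" "P1 \<inter> Q = {0}" "(P \<inter> Q) + P1 = P"
    and Q1: "Q1 \<subseteq> Q" "Q1 \<inter> P = {0}"
    and W: "vs_complements sm (P + Q) W"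
    and G: "vs_partial_iso sm G P1 Q1" "fst ` G = P1"
  obtains Y where "vs_complements sm Y Q" "Y \<inter> P = {0}"
proof -
  define S where "S = (\<lambda>(x, y). x + y) ` G"
  have S: "vs_subspace sm S"
    unfolding S_def using G(1) by (intro vs_subspace_sum_image) (simp add: vs_partial_iso_def)
  have "S + Q = P + Q"
    unfolding S_def using sum_graph_plus[OF P Q G P1(1,3) Q1(1)] .
  have in_PQ: "P \<subseteq> P + Q" "Q \<subseteq> P + Q"
    using set_zero_plus2[OF vs_subspace_zero[OF Q], of P] set_zero_plus2[OF vs_subspace_zero[OF P], of Q]
    by (simp_all add: add.commute)
  have "S \<subseteq> P + Q"
    using set_zero_plus2[OF vs_subspace_zero[OF Q], of S] \<open>S + Q = P + Q\<close> by (simp add: add.commute)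
  have "S \<inter> Q = {0}"
    unfolding S_def using sum_graph_Int_eq_zero[OF G(1) P1(2) Q1(1) Q] .
  have "(\<lambda>(x, y). x + y) ` prod.swap ` G = S"
    unfolding S_def by (force simp: add.commute)
  then have "S \<inter> P = {0}"
    using sum_graph_Int_eq_zero[OF vs_partial_iso_swap[OF G(1)] Q1(2) P1(1) P] by simp
  have "vs_complements sm (W + S) Q"
    using complement_extend[OF W S Q \<open>S \<subseteq> P + Q\<close> in_PQ(2) \<open>S \<inter> Q = {0}\<close> \<open>S + Q = P + Q\<close>] .
  moreover have "(W + S) \<inter> P = {0}"
    using complement_Int_extend[OF W S P \<open>S \<subseteq> P + Q\<close> in_PQ(1) \<open>S \<inter> P = {0}\<close>] .
  ultimately show thesis
    by (rule that)
qed

lemma complement_meeting_trivially: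
  assumes P: "vs_subspace sm P" and Q: "vs_subspace sm Q"
  obtains Y where "vs_complements sm Y Q" "Y \<inter> P = {0}"
    | Y where "vs_complements sm Y P" "Y \<inter> Q = {0}"
proof -
  have PQ: "vs_subspace sm (P \<inter> Q)"
    using vs_subspace_Int[OF P Q] .
  obtain P1 where P1: "vs_subspace sm P1" "P1 \<subseteq> P" "(P \<inter> Q) \<inter> P1 = {0}" "(P \<inter> Q) + P1 = P"
    using relative_complement_exists[OF PQ P] by (metis inf_le1)
  obtain Q1 where Q1: "vs_subspace sm Q1" "Q1 \<subseteq> Q" "(P \<inter> Q) \<inter> Q1 = {0}" "(P \<inter> Q) + Q1 = Q"
    using relative_complement_exists[OF PQ Q] by (metis inf_le2)
  obtain W where W: "vs_complements sm (P + Q) W"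
    using complement_exists[OF vs_subspace_set_plus[OF P Q]] .
  obtain G where G: "vs_partial_iso sm G P1 Q1" "fst ` G = P1 \<or> snd ` G = Q1"
    using comparable_subspaces[OF P1(1) Q1(1)] .
  have P1': "P1 \<inter> Q = {0}"
    using P1(2,3) vs_subspace_zero[OF P1(1)] vs_subspace_zero[OF Q] by blast
  have Q1': "Q1 \<inter> P = {0}"
    using Q1(2,3) vs_subspace_zero[OF Q1(1)] vs_subspace_zero[OF P] by blast
  show thesis
  proof (cases "fst ` G = P1")
    case True
    then show thesis
      using complement_from_partial_iso[OF P Q P1(2) P1' P1(4) Q1(2) Q1' W G(1)] that(1) by blast
  next
    case False
    then have "fst ` prod.swap ` G = Q1"
      using G(2) by (simp add: image_image)
    moreover have "(Q \<inter> P) + Q1 = Q" "vs_complements sm (Q + P) W"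
      using Q1(4) W by (simp_all add: Int_commute add.commute)
    ultimately show thesis
      using complement_from_partial_iso[OF Q P Q1(2) Q1' _ P1(2) P1' _ vs_partial_iso_swap[OF G(1)]]
        that(2) by blast
  qed
qed

lemma complements_chain:
  assumes P: "vs_subspace sm P" and Q: "vs_subspace sm Q"
    and iso_Q: "\<And>Y. vs_complements sm Y Q \<Longrightarrow> vs_isomorphic sm Y P"
    and iso_P: "\<And>Y. vs_complements sm Y P \<Longrightarrow> vs_isomorphic sm Y Q"
  obtains X Y where "vs_complements sm P X" "vs_complements sm X Y" "vs_complements sm Y Q"
  using complement_meeting_trivially[OF P Q]
proof cases
  case (1 Y)
  then have "vs_subspace sm Y"
    by (simp add: vs_complements_def)
  then obtain X where "vs_complements sm X P" "vs_complements sm X Y"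
    using common_complement[OF P _ 1(2) iso_Q[OF 1(1)]] by blast
  with 1(1) show thesis
    using that vs_complements_sym by blast
next
  case (2 Y)
  then have "vs_subspace sm Y"
    by (simp add: vs_complements_def)
  then obtain X where "vs_complements sm X Q" "vs_complements sm X Y"
    using common_complement[OF Q _ 2(2) iso_P[OF 2(1)]] by blast
  with 2(1) show thesis
    using that vs_complements_sym by blast
qed

lemma common_complement_eq:
  assumes "vs_complements sm X P" "vs_complements sm X Q" "P \<subseteq> Q"
  shows "P = Q"
proof
  show "Q \<subseteq> P"
  proof
    fix q assume "q \<in> Q"
    obtain x p where "x \<in> X" "p \<in> P" "q = x + p"
      using vs_complements_decomp[OF assms(1)] .
    moreover have "q - p \<in> Q"
      using \<open>q \<in> Q\<close> \<open>p \<in> P\<close> assms(2,3) by (auto simp: vs_complements_def intro: vs_subspace_diff)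
    ultimately have "x = 0"
      using vs_complements_Int[OF assms(2)] by simp
    with \<open>q = x + p\<close> \<open>p \<in> P\<close> show "q \<in> P"
      by simp
  qed
qed (rule assms(3))

definition lin_comb :: "(nat \<Rightarrow> 'v) \<Rightarrow> nat \<Rightarrow> (nat \<Rightarrow> 'k) \<Rightarrow> 'v" where
  "lin_comb v n c = (\<Sum>i<n. sm (c i) (v i))"

lemma lin_comb_0 [simp]: "lin_comb v 0 c = 0"
  by (simp add: lin_comb_def)

lemma lin_comb_zero: "lin_comb v n (\<lambda>_. 0) = 0"
  by (simp add: lin_comb_def)

lemma lin_comb_Suc: "lin_comb v (Suc n) c = lin_comb v n c + sm (c n) (v n)"
  by (simp add: lin_comb_def)

lemma lin_comb_add: "lin_comb v n c + lin_comb v n d = lin_comb v n (\<lambda>i. c i + d i)"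
  by (induct n) (simp_all add: lin_comb_Suc sm_add_left algebra_simps)

lemma lin_comb_scale: "sm a (lin_comb v n c) = lin_comb v n (\<lambda>i. a * c i)"
  by (induct n) (simp_all add: lin_comb_Suc sm_add_right sm_mult)

lemma lin_comb_minus: "- lin_comb v n c = lin_comb v n (\<lambda>i. - c i)"
  by (induct n) (simp_all add: lin_comb_Suc sm_minus_left)

lemma lin_comb_cong: "(\<And>i. i < n \<Longrightarrow> c i = d i) \<Longrightarrow> lin_comb v n c = lin_comb v n d"
  unfolding lin_comb_def by (rule sum.cong) auto

lemma lin_comb_pad: "m \<le> n \<Longrightarrow> lin_comb v m c = lin_comb v n (\<lambda>i. if i < m then c i else 0)"
proof (induct n)
  case (Suc n)
  then show ?case
    by (cases "m = Suc n") (auto simp: lin_comb_Suc intro: lin_comb_cong)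
qed simp

lemma in_vs_span: "x \<in> S \<Longrightarrow> x \<in> vs_span sm S"
  unfolding vs_span_def by (intro CollectI exI[of _ "{x}"] exI[of _ "\<lambda>_. 1"]) simp

lemma lin_comb_in_span:
  assumes "inj_on v {..<n}"
  shows "lin_comb v n c \<in> vs_span sm (v ` {..<n})"
proof -
  let ?c = "\<lambda>x. c (the_inv_into {..<n} v x)"
  have "(\<Sum>x\<in>v ` {..<n}. sm (?c x) x) = (\<Sum>i<n. sm (?c (v i)) (v i))"
    using sum.reindex[OF assms] by simp
  also have "\<dots> = lin_comb v n c"
    unfolding lin_comb_def using the_inv_into_f_f[OF assms] by (intro sum.cong) auto
  finally show ?thesis
    unfolding vs_span_def by (intro CollectI exI[of _ "v ` {..<n}"] exI[of _ ?c]) simp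
qed

primrec fresh_list :: "nat \<Rightarrow> 'v list" where
  "fresh_list 0 = []"
| "fresh_list (Suc n) = fresh_list n @ [SOME x. x \<notin> vs_span sm (set (fresh_list n))]"

lemma independent_sequence_exists:
  assumes "\<not> finite_dimensional_vs sm"
  obtains v :: "nat \<Rightarrow> 'v" where "\<And>n c i. lin_comb v n c = 0 \<Longrightarrow> i < n \<Longrightarrow> c i = 0"
proof -
  define v where "v n = (SOME x. x \<notin> vs_span sm (set (fresh_list n)))" for n
  have "fresh_list n = map v [0..<n]" for n
    by (induct n) (simp_all add: v_def)
  then have span_eq: "vs_span sm (set (fresh_list n)) = vs_span sm (v ` {..<n})" for n
    by (simp add: atLeast0LessThan)
  have fresh: "v n \<notin> vs_span sm (v ` {..<n})" for n
  proof -
    have "vs_span sm (set (fresh_list n)) \<noteq> UNIV"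
      using assms unfolding finite_dimensional_vs_def by blast
    then have "\<exists>x. x \<notin> vs_span sm (set (fresh_list n))"
      by blast
    then have "v n \<notin> vs_span sm (set (fresh_list n))"
      unfolding v_def by (rule someI_ex)
    then show ?thesis
      by (simp add: span_eq)
  qed
  have "v i \<noteq> v n" if "i < n" for i n
    using fresh[of n] in_vs_span[of "v i" "v ` {..<n}"] that by auto
  then have inj: "inj_on v {..<n}" for n
    unfolding inj_on_def by (metis linorder_neqE_nat)
  have "c i = 0" if "lin_comb v n c = 0" "i < n" for n c i
    using that
  proof (induct n arbitrary: i)
    case (Suc n)
    have "c n = 0"
    proof (rule ccontr)
      assume "c n \<noteq> 0"
      have "sm (c n) (v n) = - lin_comb v n c"
        using Suc.prems(1) by (simp add: lin_comb_Suc eq_neg_iff_add_eq_0 add.commute)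
      then have "v n = lin_comb v n (\<lambda>i. inverse (c n) * - c i)"
        using sm_inverse_cancel[OF \<open>c n \<noteq> 0\<close>, of "v n"] by (simp add: lin_comb_minus lin_comb_scale)
      then show False
        using fresh[of n] lin_comb_in_span[OF inj] by metis
    qed
    then show ?case
      using Suc by (cases "i = n") (auto simp: lin_comb_Suc)
  qed simp
  then show thesis
    by (rule that)
qed

text \<open>The pairs \<open>down_shift v n c\<close> form the graph of the backward shift \<open>v (i + 1) \<mapsto> v i\<close>,
  \<open>v 0 \<mapsto> 0\<close> on the span of \<open>v\<close>.\<close>

definition down_shift :: "(nat \<Rightarrow> 'v) \<Rightarrow> nat \<Rightarrow> (nat \<Rightarrow> 'k) \<Rightarrow> 'v \<times> 'v" where
  "down_shift v n c = (lin_comb v (Suc n) c, lin_comb v n (\<lambda>i. c (Suc i)))"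

lemma down_shift_pad: "m \<le> n \<Longrightarrow> down_shift v m c = down_shift v n (\<lambda>i. if i < Suc m then c i else 0)"
  using lin_comb_pad[of "Suc m" "Suc n" v c] lin_comb_pad[of m n v "\<lambda>i. c (Suc i)"]
  by (simp add: down_shift_def)

lemma vs_subspace_down_shift_graph: "vs_subspace (pair_sm sm) (range (case_prod (down_shift v)))"
  unfolding vs_subspace_def
proof (intro conjI ballI allI)
  have in_graph: "down_shift v n c \<in> range (case_prod (down_shift v))" for n c
    using rangeI[of "case_prod (down_shift v)" "(n, c)"] by simp
  have "down_shift v 0 (\<lambda>_. 0) = 0"
    by (simp add: down_shift_def lin_comb_Suc zero_prod_def)
  then show "0 \<in> range (case_prod (down_shift v))"
    using in_graph[of 0 "\<lambda>_. 0"] by simp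
  show "x + y \<in> range (case_prod (down_shift v))"
    if xy: "x \<in> range (case_prod (down_shift v))" "y \<in> range (case_prod (down_shift v))" for x y
  proof -
    obtain m c n d where "x = down_shift v m c" "y = down_shift v n d"
      using xy by auto
    then have "x + y = down_shift v (max m n) (\<lambda>i. (if i < Suc m then c i else 0) + (if i < Suc n then d i else 0))"
      using down_shift_pad[of m "max m n" v c] down_shift_pad[of n "max m n" v d]
      by (simp add: down_shift_def lin_comb_add)
    then show ?thesis
      by (simp add: in_graph)
  qed
  show "pair_sm sm a x \<in> range (case_prod (down_shift v))" if x: "x \<in> range (case_prod (down_shift v))" for a x
  proof -
    obtain n c where "x = down_shift v n c"
      using x by auto
    then have "pair_sm sm a x = down_shift v n (\<lambda>i. a * c i)"
      by (simp add: down_shift_def lin_comb_scale)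
    then show ?thesis
      by (simp add: in_graph)
  qed
qed

lemma surj_linear_map_with_kernel:
  assumes "\<not> finite_dimensional_vs sm"
  obtains a n where "vs_linear sm a" "surj a" "a n = 0" "n \<noteq> 0"
proof -
  obtain v where indep: "\<And>n c i. lin_comb v n c = 0 \<Longrightarrow> i < n \<Longrightarrow> c i = 0"
    using independent_sequence_exists[OF assms] by blast
  let ?G = "range (case_prod (down_shift v))"
  have in_graph: "down_shift v n c \<in> ?G" for n c
    using rangeI[of "case_prod (down_shift v)" "(n, c)"] by simp
  have functional: "y = 0" if y: "(0, y) \<in> ?G" for y
  proof -
    obtain n c where "lin_comb v (Suc n) c = 0" "y = lin_comb v n (\<lambda>i. c (Suc i))"
      using y by (auto simp: down_shift_def)
    then show "y = 0"
      using indep lin_comb_cong[of n "\<lambda>i. c (Suc i)" "\<lambda>_. 0" v] lin_comb_zero by simp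
  qed
  obtain W where SW: "vs_complements sm (fst ` ?G) W"
    using complement_exists[OF vs_subspace_fst[OF vs_subspace_down_shift_graph]] .
  obtain a where a: "vs_linear sm a" "\<And>x y. (x, y) \<in> ?G \<Longrightarrow> a x = y" "\<And>x. x \<in> W \<Longrightarrow> a x = id x"
    using vs_linear_extension[OF SW vs_subspace_down_shift_graph refl functional vs_linear_id] by blast
  have "u \<in> range a" for u
  proof -
    obtain s w where "s \<in> fst ` ?G" "w \<in> W" "u = s + w"
      using vs_complements_decomp[OF SW] .
    then obtain n c where "s = lin_comb v (Suc n) c"
      by (auto simp: down_shift_def)
    then have "a (lin_comb v (Suc (Suc n)) (case_nat 0 c)) = s"
      using a(2) in_graph[of "Suc n" "case_nat 0 c"] by (simp add: down_shift_def)
    then have "a (lin_comb v (Suc (Suc n)) (case_nat 0 c) + w) = u"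
      using vs_linear_add[OF a(1)] a(3) \<open>w \<in> W\<close> \<open>u = s + w\<close> by simp
    then show ?thesis
      by (metis rangeI)
  qed
  moreover have "a (v 0) = 0"
    using a(2) in_graph[of 0 "\<lambda>_. 1"] by (simp add: down_shift_def lin_comb_Suc)
  moreover have "v 0 \<noteq> 0"
    using indep[of 1 "\<lambda>_. 1" 0] by (auto simp: lin_comb_Suc)
  ultimately show thesis
    using that a(1) by blast
qed

end

section \<open>Paths in the distant graph\<close>

lemma distant_in_proj_line: "distant R p q \<Longrightarrow> p \<in> proj_line R \<and> q \<in> proj_line R"
  unfolding distant_def proj_line_def by blast

lemma dpath_0: "dpath R p q 0 \<longleftrightarrow> p = q \<and> p \<in> proj_line R"
  unfolding dpath_def by (auto intro!: exI[of _ "[p]"] simp: length_Suc_conv)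

lemma dpath_Suc: "dpath R p q (Suc n) \<longleftrightarrow> (\<exists>x. distant R p x \<and> dpath R x q n)"
proof
  assume "dpath R p q (Suc n)"
  then obtain xs where xs: "length xs = Suc (Suc n)" "xs ! 0 = p" "xs ! Suc n = q" "set xs \<subseteq> proj_line R"
    "\<forall>i<Suc n. distant R (xs ! i) (xs ! Suc i)"
    unfolding dpath_def by blast
  then obtain ys where ys: "xs = p # ys"
    by (cases xs) auto
  have "distant R p (ys ! 0)"
    using xs(5) ys by force
  moreover have "dpath R (ys ! 0) q n"
    unfolding dpath_def using xs ys by (intro exI[of _ ys]) auto
  ultimately show "\<exists>x. distant R p x \<and> dpath R x q n"
    by blast
next
  assume "\<exists>x. distant R p x \<and> dpath R x q n"
  then obtain x xs where "distant R p x" "length xs = Suc n" "xs ! 0 = x" "xs ! n = q"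
    "set xs \<subseteq> proj_line R" "\<forall>i<n. distant R (xs ! i) (xs ! Suc i)"
    unfolding dpath_def by blast
  then show "dpath R p q (Suc n)"
    unfolding dpath_def using distant_in_proj_line[of R p x]
    by (intro exI[of _ "p # xs"]) (auto simp: nth_Cons split: nat.split)
qed

lemma proj_connected_diameter:
  assumes paths: "\<And>p q. p \<in> proj_line R \<Longrightarrow> q \<in> proj_line R \<Longrightarrow> dpath R p q n"
    and far: "p0 \<in> proj_line R" "q0 \<in> proj_line R" "\<And>m. m < n \<Longrightarrow> \<not> dpath R p0 q0 m"
  shows "proj_connected R \<and> proj_diameter R = enat n"
proof -
  have distance: "proj_distance R p q = enat (LEAST m. dpath R p q m)"
    if "p \<in> proj_line R" "q \<in> proj_line R" for p q
    using paths[OF that] unfolding proj_distance_def by auto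
  have "proj_distance R p q \<le> enat n" if "p \<in> proj_line R" "q \<in> proj_line R" for p q
    using Least_le[of "dpath R p q" n] paths[OF that] distance[OF that] by simp
  then have "proj_diameter R \<le> enat n"
    unfolding proj_diameter_def by (intro SUP_least)
  moreover have "(LEAST m. dpath R p0 q0 m) = n"
    using paths[OF far(1,2)] far(3) by (intro Least_equality) (auto simp: not_less[symmetric])
  then have "enat n \<le> proj_diameter R"
    unfolding proj_diameter_def using distance[OF far(1,2)]
      SUP_upper2[OF far(1), of "enat n" "\<lambda>p. SUP q\<in>proj_line R. proj_distance R p q"]
      SUP_upper[OF far(2), of "proj_distance R p0"] by simp
  ultimately show ?thesis
    using paths unfolding proj_connected_def by auto
qed

section \<open>The projective line over an endomorphism ring\<close>

definition row_map :: "('u::ab_group_add \<Rightarrow> 'u) \<Rightarrow> ('u \<Rightarrow> 'u) \<Rightarrow> 'u \<times> 'u \<Rightarrow> 'u" where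
  "row_map a b z = a (fst z) + b (snd z)"

definition mat_map :: "('u::ab_group_add \<Rightarrow> 'u) \<Rightarrow> ('u \<Rightarrow> 'u) \<Rightarrow> ('u \<Rightarrow> 'u) \<Rightarrow> ('u \<Rightarrow> 'u) \<Rightarrow> 'u \<times> 'u \<Rightarrow> 'u \<times> 'u" where
  "mat_map a b c d z = (row_map a b z, row_map c d z)"

definition row_kernel :: "('u::ab_group_add \<Rightarrow> 'u) \<Rightarrow> ('u \<Rightarrow> 'u) \<Rightarrow> ('u \<times> 'u) set" where
  "row_kernel a b = {z. row_map a b z = 0}"

definition point_kernel :: "(('u::ab_group_add \<Rightarrow> 'u) \<times> ('u \<Rightarrow> 'u)) set \<Rightarrow> ('u \<times> 'u) set" where
  "point_kernel p = {z. \<forall>(r, s) \<in> p. row_map r s z = 0}"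

lemma End_ring_simps:
  "carrier (End_ring sm) = {f. vs_linear sm f}"
  "mult (End_ring sm) = (\<lambda>f g. f \<circ> g)"
  "add (End_ring sm) = (\<lambda>f g x. f x + g x)"
  "one (End_ring sm) = id"
  "zero (End_ring sm) = (\<lambda>_. 0)"
  by (simp_all add: End_ring_def)

locale end_ring = left_vs sm for sm :: "'k::division_ring \<Rightarrow> 'u::ab_group_add \<Rightarrow> 'u"
begin

sublocale pair: left_vs "pair_sm sm"
  by (rule left_vs_pair)

abbreviation R :: "('u \<Rightarrow> 'u) ring" where
  "R \<equiv> End_ring sm"

lemma row_map_add: "vs_linear sm a \<Longrightarrow> vs_linear sm b \<Longrightarrow> row_map a b (z + z') = row_map a b z + row_map a b z'"
  by (simp add: row_map_def vs_linear_add algebra_simps)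

lemma row_map_scale: "vs_linear sm a \<Longrightarrow> vs_linear sm b \<Longrightarrow> row_map a b (pair_sm sm k z) = sm k (row_map a b z)"
  by (simp add: row_map_def pair_sm_def vs_linear_scale sm_add_right)

lemma row_map_diff: "vs_linear sm a \<Longrightarrow> vs_linear sm b \<Longrightarrow> row_map a b (z - z') = row_map a b z - row_map a b z'"
  by (simp add: row_map_def vs_linear_diff algebra_simps)

lemma vs_linear_mat_map:
  assumes "vs_linear sm a" "vs_linear sm b" "vs_linear sm c" "vs_linear sm d"
  shows "vs_linear (pair_sm sm) (mat_map a b c d)"
  using assms by (simp add: vs_linear_def mat_map_def row_map_add row_map_scale)

lemma mat_map_comp:
  assumes "vs_linear sm a" "vs_linear sm b" "vs_linear sm c" "vs_linear sm d"
  shows "mat_map a b c d \<circ> mat_map e f g h =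
    mat_map (\<lambda>x. a (e x) + b (g x)) (\<lambda>y. a (f y) + b (h y)) (\<lambda>x. c (e x) + d (g x)) (\<lambda>y. c (f y) + d (h y))"
  by (rule ext) (simp add: mat_map_def row_map_def vs_linear_add[OF assms(1)] vs_linear_add[OF assms(2)]
      vs_linear_add[OF assms(3)] vs_linear_add[OF assms(4)] algebra_simps)

lemma mat_map_id: "mat_map id (\<lambda>_. 0) (\<lambda>_. 0) id = id"
  by (auto simp: mat_map_def row_map_def)

lemma mat_map_eq_idD:
  assumes "mat_map a b c d = id" "a 0 = 0" "b 0 = 0" "c 0 = 0" "d 0 = 0"
  shows "a = id \<and> b = (\<lambda>_. 0) \<and> c = (\<lambda>_. 0) \<and> d = id"
proof -
  have "mat_map a b c d (x, 0) = (x, 0)" "mat_map a b c d (0, x) = (0, x)" for x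
    by (simp_all add: assms(1))
  then show ?thesis
    using assms(2-5) by (auto simp: mat_map_def row_map_def)
qed

lemma row_map_of_functional:
  assumes add: "\<And>z z'. \<phi> (z + z') = \<phi> z + \<phi> z'" and scale: "\<And>k z. \<phi> (pair_sm sm k z) = sm k (\<phi> z)"
  obtains a b where "\<phi> = row_map a b" "vs_linear sm a" "vs_linear sm b"
proof
  show "\<phi> = row_map (\<lambda>x. \<phi> (x, 0)) (\<lambda>y. \<phi> (0, y))"
  proof
    fix z :: "'u \<times> 'u"
    show "\<phi> z = row_map (\<lambda>x. \<phi> (x, 0)) (\<lambda>y. \<phi> (0, y)) z"
      using add[of "(fst z, 0)" "(0, snd z)"] by (simp add: row_map_def)
  qed
  show "vs_linear sm (\<lambda>x. \<phi> (x, 0))" "vs_linear sm (\<lambda>y. \<phi> (0, y))"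
    unfolding vs_linear_def
    using add[of "(x, 0)" "(y, 0)" for x y] add[of "(0, x)" "(0, y)" for x y]
      scale[of _ "(x, 0)" for x] scale[of _ "(0, x)" for x] by simp_all
qed

lemma mat_map_of_linear:
  assumes "vs_linear (pair_sm sm) N"
  obtains e f g h where "N = mat_map e f g h"
    "vs_linear sm e" "vs_linear sm f" "vs_linear sm g" "vs_linear sm h"
proof -
  have "fst (N (z + z')) = fst (N z) + fst (N z')" "fst (N (pair_sm sm k z)) = sm k (fst (N z))"
    and "snd (N (z + z')) = snd (N z) + snd (N z')" "snd (N (pair_sm sm k z)) = sm k (snd (N z))"
    for z z' k
    by (simp_all add: pair.vs_linear_add[OF assms] pair.vs_linear_scale[OF assms] fst_pair_sm snd_pair_sm)
  then obtain e f g h where "(\<lambda>z. fst (N z)) = row_map e f" "(\<lambda>z. snd (N z)) = row_map g h"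
    and lin: "vs_linear sm e" "vs_linear sm f" "vs_linear sm g" "vs_linear sm h"
    using row_map_of_functional[of "\<lambda>z. fst (N z)"] row_map_of_functional[of "\<lambda>z. snd (N z)"] by metis
  then have "N = mat_map e f g h"
    by (auto simp: mat_map_def fun_eq_iff prod_eq_iff)
  with lin that show thesis
    by blast
qed

lemma mat2_invertibleD:
  assumes "mat2_invertible R a b c d"
  shows "vs_linear sm a" "vs_linear sm b" "vs_linear sm c" "vs_linear sm d" "bij (mat_map a b c d)"
proof -
  obtain e f g h where lin: "vs_linear sm a" "vs_linear sm b" "vs_linear sm c" "vs_linear sm d"
      and lin': "vs_linear sm e" "vs_linear sm f" "vs_linear sm g" "vs_linear sm h"
    and eqs: "(\<lambda>x. a (e x) + b (g x)) = id" "(\<lambda>x. a (f x) + b (h x)) = (\<lambda>_. 0)"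
      "(\<lambda>x. c (e x) + d (g x)) = (\<lambda>_. 0)" "(\<lambda>x. c (f x) + d (h x)) = id"
      "(\<lambda>x. e (a x) + f (c x)) = id" "(\<lambda>x. e (b x) + f (d x)) = (\<lambda>_. 0)"
      "(\<lambda>x. g (a x) + h (c x)) = (\<lambda>_. 0)" "(\<lambda>x. g (b x) + h (d x)) = id"
    using assms unfolding mat2_invertible_def End_ring_simps by (auto simp: o_def)
  have "mat_map a b c d \<circ> mat_map e f g h = id"
    using mat_map_comp[OF lin, of e f g h] eqs(1-4) mat_map_id by simp
  moreover have "mat_map e f g h \<circ> mat_map a b c d = id"
    using mat_map_comp[OF lin', of a b c d] eqs(5-8) mat_map_id by simp
  ultimately show "bij (mat_map a b c d)"
    using o_bij by blast
  show "vs_linear sm a" "vs_linear sm b" "vs_linear sm c" "vs_linear sm d"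
    by (fact lin)+
qed

lemma mat2_invertibleI:
  assumes lin: "vs_linear sm a" "vs_linear sm b" "vs_linear sm c" "vs_linear sm d"
    and M: "bij (mat_map a b c d)"
  shows "mat2_invertible R a b c d"
proof -
  define N where "N = inv_into UNIV (mat_map a b c d)"
  have N_lin: "vs_linear (pair_sm sm) N"
    unfolding N_def using pair.vs_linear_inv[OF vs_linear_mat_map[OF lin] M] .
  obtain e f g h where N_eq: "N = mat_map e f g h"
    and lin': "vs_linear sm e" "vs_linear sm f" "vs_linear sm g" "vs_linear sm h"
    using mat_map_of_linear[OF N_lin] .
  have "mat_map a b c d \<circ> N = id" "N \<circ> mat_map a b c d = id"
    using surj_iff[of "mat_map a b c d"] inj_iff[of "mat_map a b c d"] bij_is_surj[OF M] bij_is_inj[OF M]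
    unfolding N_def by simp_all
  then have "mat_map (\<lambda>x. a (e x) + b (g x)) (\<lambda>y. a (f y) + b (h y)) (\<lambda>x. c (e x) + d (g x)) (\<lambda>y. c (f y) + d (h y)) = id"
    "mat_map (\<lambda>x. e (a x) + f (c x)) (\<lambda>y. e (b y) + f (d y)) (\<lambda>x. g (a x) + h (c x)) (\<lambda>y. g (b y) + h (d y)) = id"
    unfolding N_eq mat_map_comp[OF lin] mat_map_comp[OF lin'] by simp_all
  from this[THEN mat_map_eq_idD] show ?thesis
    unfolding mat2_invertible_def End_ring_simps using lin lin'
    by (auto simp: o_def vs_linear_zero)
qed

lemma mat2_invertible_iff:
  "mat2_invertible R a b c d \<longleftrightarrow>
     vs_linear sm a \<and> vs_linear sm b \<and> vs_linear sm c \<and> vs_linear sm d \<and> bij (mat_map a b c d)"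
  using mat2_invertibleD[of a b c d] mat2_invertibleI[of a b c d] by blast

lemma admissible_iff:
  "admissible R a b \<longleftrightarrow>
     (\<exists>c d. vs_linear sm a \<and> vs_linear sm b \<and> vs_linear sm c \<and> vs_linear sm d \<and> bij (mat_map a b c d))"
  unfolding admissible_def mat2_invertible_iff End_ring_simps by blast

lemma proj_line_cases:
  assumes "p \<in> proj_line R"
  obtains a b c d where "p = cyc R a b"
    "vs_linear sm a" "vs_linear sm b" "vs_linear sm c" "vs_linear sm d" "bij (mat_map a b c d)"
  using assms unfolding proj_line_def admissible_iff by blast

lemma row_map_surj:
  assumes "bij (mat_map a b c d)"
  shows "surj (row_map a b)" "surj (row_map c d)"
proof -
  have "\<exists>z. u = row_map a b z \<and> v = row_map c d z" for u v
    using surjD[OF bij_is_surj[OF assms], of "(u, v)"] by (auto simp: mat_map_def)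
  then show "surj (row_map a b)" "surj (row_map c d)"
    unfolding surj_def by blast+
qed

lemma point_kernel_cyc:
  assumes a: "vs_linear sm a" and b: "vs_linear sm b"
  shows "point_kernel (cyc R a b) = row_kernel a b"
proof
  have "(id \<circ> a, id \<circ> b) \<in> cyc R a b"
    unfolding cyc_def End_ring_simps using vs_linear_id by blast
  then show "point_kernel (cyc R a b) \<subseteq> row_kernel a b"
    unfolding point_kernel_def row_kernel_def row_map_def by fastforce
  have "row_map (r \<circ> a) (r \<circ> b) z = 0" if "vs_linear sm r" "row_map a b z = 0" for r z
    using that vs_linear_add[of r "a (fst z)" "b (snd z)"] vs_linear_zero[of r] by (simp add: row_map_def)
  then show "row_kernel a b \<subseteq> point_kernel (cyc R a b)"
    unfolding point_kernel_def row_kernel_def cyc_def End_ring_simps by auto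
qed

lemma vs_subspace_row_kernel:
  assumes "vs_linear sm a" "vs_linear sm b"
  shows "vs_subspace (pair_sm sm) (row_kernel a b)"
  unfolding vs_subspace_def row_kernel_def
  using row_map_add[OF assms] row_map_scale[OF assms] assms
  by (simp add: row_map_def vs_linear_zero)

lemma complements_of_bij_mat_map:
  assumes lin: "vs_linear sm a" "vs_linear sm b" "vs_linear sm c" "vs_linear sm d"
    and M: "bij (mat_map a b c d)"
  shows "vs_complements (pair_sm sm) (row_kernel a b) (row_kernel c d)"
proof -
  let ?M = "mat_map a b c d"
  let ?N = "inv_into UNIV ?M"
  have MN: "?M (?N w) = w" and NM: "?N (?M z) = z" for w z
    using bij_is_surj[OF M] bij_is_inj[OF M] by (simp_all add: surj_f_inv_f)
  have N_add: "?N (w + w') = ?N w + ?N w'" for w w'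
    using pair.vs_linear_add[OF pair.vs_linear_inv[OF vs_linear_mat_map[OF lin] M]] .
  have "z = 0" if "z \<in> row_kernel a b" "z \<in> row_kernel c d" for z
  proof -
    have "?M z = ?M 0"
      using that pair.vs_linear_zero[OF vs_linear_mat_map[OF lin]]
      by (simp add: row_kernel_def mat_map_def zero_prod_def)
    then show ?thesis
      using bij_is_inj[OF M] by (simp add: inj_eq)
  qed
  then have "row_kernel a b \<inter> row_kernel c d = {0}"
    using pair.vs_subspace_zero[OF vs_subspace_row_kernel] lin by blast
  moreover have "z \<in> row_kernel a b + row_kernel c d" for z
  proof -
    have z: "z = ?N (0, snd (?M z)) + ?N (fst (?M z), 0)"
      using N_add[of "(0, snd (?M z))" "(fst (?M z), 0)"] NM[of z] by (simp add: add.commute)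
    have "?N (0, snd (?M z)) \<in> row_kernel a b" "?N (fst (?M z), 0) \<in> row_kernel c d"
      using MN[of "(0, snd (?M z))"] MN[of "(fst (?M z), 0)"] by (simp_all add: row_kernel_def mat_map_def)
    then show ?thesis
      by (subst z) (rule set_plus_intro)
  qed
  ultimately show ?thesis
    unfolding vs_complements_def using vs_subspace_row_kernel lin by auto
qed

lemma bij_mat_map_of_complements:
  assumes lin: "vs_linear sm a" "vs_linear sm b" "vs_linear sm c" "vs_linear sm d"
    and surj: "surj (row_map a b)" "surj (row_map c d)"
    and C: "vs_complements (pair_sm sm) (row_kernel a b) (row_kernel c d)"
  shows "bij (mat_map a b c d)"
proof -
  have "inj (mat_map a b c d)"
  proof (rule injI)
    fix z z' assume "mat_map a b c d z = mat_map a b c d z'"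
    then have "z - z' \<in> row_kernel a b" "z - z' \<in> row_kernel c d"
      by (simp_all add: mat_map_def row_kernel_def row_map_diff lin)
    then have "z - z' = 0"
      by (rule pair.vs_complements_Int[OF C])
    then show "z = z'"
      by simp
  qed
  moreover have "w \<in> range (mat_map a b c d)" for w
  proof -
    obtain z1 z2 where z: "fst w = row_map a b z1" "snd w = row_map c d z2"
      using surjD[OF surj(1)] surjD[OF surj(2)] by blast
    obtain k1 k2 where k: "k1 \<in> row_kernel a b" "k2 \<in> row_kernel c d" "z1 = k1 + k2"
      using pair.vs_complements_decomp[OF C] .
    obtain k1' k2' where k': "k1' \<in> row_kernel a b" "k2' \<in> row_kernel c d" "z2 = k1' + k2'"
      using pair.vs_complements_decomp[OF C] .
    have "mat_map a b c d (k2 + k1') = w"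
      using z k k' by (simp add: mat_map_def row_kernel_def row_map_add lin prod_eq_iff)
    then show ?thesis
      using range_eqI[of w "mat_map a b c d" "k2 + k1'"] by simp
  qed
  then have "surj (mat_map a b c d)"
    by blast
  ultimately show ?thesis
    by (simp add: bij_def)
qed

lemma distant_iff:
  "distant R p q \<longleftrightarrow>
     p \<in> proj_line R \<and> q \<in> proj_line R \<and> vs_complements (pair_sm sm) (point_kernel p) (point_kernel q)"
proof
  assume "distant R p q"
  then obtain a b c d where ab: "admissible R a b" and cd: "admissible R c d"
    and pq: "p = cyc R a b" "q = cyc R c d" and "mat2_invertible R a b c d"
    unfolding distant_def by blast
  then have lin: "vs_linear sm a" "vs_linear sm b" "vs_linear sm c" "vs_linear sm d"
    and M: "bij (mat_map a b c d)"
    by (simp_all add: mat2_invertible_iff)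
  have "vs_complements (pair_sm sm) (row_kernel a b) (row_kernel c d)"
    using complements_of_bij_mat_map[OF lin M] .
  then show "p \<in> proj_line R \<and> q \<in> proj_line R \<and> vs_complements (pair_sm sm) (point_kernel p) (point_kernel q)"
    using ab cd pq point_kernel_cyc lin unfolding proj_line_def by auto
next
  assume "p \<in> proj_line R \<and> q \<in> proj_line R \<and> vs_complements (pair_sm sm) (point_kernel p) (point_kernel q)"
  then have p: "p \<in> proj_line R" and q: "q \<in> proj_line R"
    and C: "vs_complements (pair_sm sm) (point_kernel p) (point_kernel q)" by auto
  obtain a b c1 d1 where ab: "p = cyc R a b" "vs_linear sm a" "vs_linear sm b" "vs_linear sm c1" "vs_linear sm d1"
    "bij (mat_map a b c1 d1)"
    using proj_line_cases[OF p] .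
  obtain c d a2 b2 where cd: "q = cyc R c d" "vs_linear sm c" "vs_linear sm d" "vs_linear sm a2" "vs_linear sm b2"
    "bij (mat_map c d a2 b2)"
    using proj_line_cases[OF q] .
  have "bij (mat_map a b c d)"
    using bij_mat_map_of_complements[OF ab(2,3) cd(2,3) row_map_surj(1)[OF ab(6)] row_map_surj(1)[OF cd(6)]]
      C ab(1) cd(1) point_kernel_cyc ab(2,3) cd(2,3) by simp
  then show "distant R p q"
    unfolding distant_def admissible_iff mat2_invertible_iff using ab cd by blast
qed

lemma vs_subspace_point_kernel:
  "p \<in> proj_line R \<Longrightarrow> vs_subspace (pair_sm sm) (point_kernel p)"
  by (metis proj_line_cases point_kernel_cyc vs_subspace_row_kernel)

lemma bij_mat_map_inverse:
  assumes "bij (mat_map a b c d)"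
  shows "mat_map a b c d (inv_into UNIV (mat_map a b c d) w) = w"
    "inv_into UNIV (mat_map a b c d) (mat_map a b c d z) = z"
  using bij_is_surj[OF assms] bij_is_inj[OF assms] by (simp_all add: surj_f_inv_f)

lemma surj_row_with_kernel:
  assumes lin: "vs_linear sm a" "vs_linear sm b" "vs_linear sm c" "vs_linear sm d"
    and M: "bij (mat_map a b c d)" and KX: "vs_complements (pair_sm sm) (row_kernel a b) X"
  obtains a' b' where "vs_linear sm a'" "vs_linear sm b'" "row_kernel a' b' = X" "surj (row_map a' b')"
proof -
  let ?N = "inv_into UNIV (mat_map a b c d)"
  obtain \<pi> where \<pi>: "vs_linear (pair_sm sm) \<pi>" "\<And>k. k \<in> row_kernel a b \<Longrightarrow> \<pi> k = k"
    "\<And>x. x \<in> X \<Longrightarrow> \<pi> x = 0" "\<And>z. \<pi> z \<in> row_kernel a b" "\<And>z. z - \<pi> z \<in> X"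
    using pair.vs_projection_exists[OF KX] by blast
  \<comment> \<open>\<open>(c, d)\<close> maps \<open>ker (a, b)\<close> isomorphically onto \<open>U\<close>; composed with the projection onto
    \<open>ker (a, b)\<close> along \<open>X\<close> it becomes a surjective row with kernel \<open>X\<close>.\<close>
  have "row_map c d (\<pi> (z + z')) = row_map c d (\<pi> z) + row_map c d (\<pi> z')"
    "row_map c d (\<pi> (pair_sm sm k z)) = sm k (row_map c d (\<pi> z))" for z z' k
    using pair.vs_linear_add[OF \<pi>(1)] pair.vs_linear_scale[OF \<pi>(1)] row_map_add[OF lin(3,4)]
      row_map_scale[OF lin(3,4)] by simp_all
  then obtain a' b' where ab': "(\<lambda>z. row_map c d (\<pi> z)) = row_map a' b'" "vs_linear sm a'" "vs_linear sm b'"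
    by (rule row_map_of_functional)
  have row': "row_map a' b' z = row_map c d (\<pi> z)" for z
    using fun_cong[OF ab'(1), of z] by simp
  have "row_kernel a' b' = X"
  proof (intro equalityI subsetI)
    fix z assume "z \<in> row_kernel a' b'"
    then have "mat_map a b c d (\<pi> z) = 0"
      using \<pi>(4)[of z] by (simp add: row_kernel_def row' mat_map_def zero_prod_def)
    then have "\<pi> z = 0"
      using bij_mat_map_inverse(2)[OF M, of "\<pi> z"] bij_mat_map_inverse(2)[OF M, of 0]
        pair.vs_linear_zero[OF vs_linear_mat_map[OF lin]] by metis
    then show "z \<in> X"
      using \<pi>(5)[of z] by simp
  next
    fix z assume "z \<in> X"
    moreover have "row_map c d 0 = 0"
      using lin(3,4) by (simp add: row_map_def vs_linear_zero)
    ultimately show "z \<in> row_kernel a' b'"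
      using \<pi>(3) by (simp add: row_kernel_def row')
  qed
  moreover have "row_map a' b' (?N (0, u)) = u" for u
  proof -
    have "?N (0, u) \<in> row_kernel a b" "row_map c d (?N (0, u)) = u"
      using bij_mat_map_inverse(1)[OF M, of "(0, u)"] by (simp_all add: row_kernel_def mat_map_def)
    then show ?thesis
      using \<pi>(2) by (simp add: row')
  qed
  then have "surj (row_map a' b')"
    using surjI[of "row_map a' b'" "\<lambda>u. ?N (0, u)"] by blast
  ultimately show thesis
    using that ab'(2,3) by blast
qed

lemma point_of_complement:
  assumes p: "p \<in> proj_line R" and C: "vs_complements (pair_sm sm) (point_kernel p) X"
  obtains x where "x \<in> proj_line R" "point_kernel x = X"
proof -
  obtain a b c d where p_eq: "p = cyc R a b" and lin: "vs_linear sm a" "vs_linear sm b" "vs_linear sm c" "vs_linear sm d"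
    and M: "bij (mat_map a b c d)"
    using proj_line_cases[OF p] .
  have KX: "vs_complements (pair_sm sm) (row_kernel a b) X"
    using C p_eq point_kernel_cyc lin by simp
  obtain a' b' where ab': "vs_linear sm a'" "vs_linear sm b'" "row_kernel a' b' = X" "surj (row_map a' b')"
    using surj_row_with_kernel[OF lin M KX] .
  have "bij (mat_map a' b' a b)"
    using bij_mat_map_of_complements[OF ab'(1,2) lin(1,2) ab'(4) row_map_surj(1)[OF M]]
      pair.vs_complements_sym[OF KX] ab'(3) by simp
  then have "cyc R a' b' \<in> proj_line R"
    unfolding proj_line_def admissible_iff using ab'(1,2) lin by blast
  moreover have "point_kernel (cyc R a' b') = X"
    using point_kernel_cyc[OF ab'(1,2)] ab'(3) by simp
  ultimately show thesis
    by (rule that)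
qed

lemma complement_isomorphic:
  assumes p: "p \<in> proj_line R" and q: "q \<in> proj_line R"
    and C: "vs_complements (pair_sm sm) Y (point_kernel q)"
  shows "vs_isomorphic (pair_sm sm) Y (point_kernel p)"
proof -
  obtain a b c d where p_eq: "p = cyc R a b" and lin: "vs_linear sm a" "vs_linear sm b" "vs_linear sm c" "vs_linear sm d"
    and M: "bij (mat_map a b c d)"
    using proj_line_cases[OF p] .
  obtain a2 b2 c2 d2 where q_eq: "q = cyc R a2 b2" and lin2: "vs_linear sm a2" "vs_linear sm b2"
    and M2: "bij (mat_map a2 b2 c2 d2)"
    using proj_line_cases[OF q] .
  let ?N = "inv_into UNIV (mat_map a b c d)"
  have N_lin: "vs_linear (pair_sm sm) ?N"
    using pair.vs_linear_inv[OF vs_linear_mat_map[OF lin] M] .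
  have C': "vs_complements (pair_sm sm) Y (row_kernel a2 b2)"
    using C q_eq point_kernel_cyc lin2 by simp
  define \<chi> where "\<chi> z = ?N (0, row_map a2 b2 z)" for z
  have "vs_linear (pair_sm sm) \<chi>"
    unfolding vs_linear_def \<chi>_def
    using pair.vs_linear_add[OF N_lin, of "(0, _)" "(0, _)"] pair.vs_linear_scale[OF N_lin, of _ "(0, _)"]
    by (simp add: row_map_add[OF lin2] row_map_scale[OF lin2])
  moreover have "inj_on \<chi> Y"
  proof (rule inj_onI)
    fix y y' assume "y \<in> Y" "y' \<in> Y" "\<chi> y = \<chi> y'"
    then have "mat_map a b c d (\<chi> y) = mat_map a b c d (\<chi> y')"
      by simp
    then have "y - y' \<in> row_kernel a2 b2"
      unfolding \<chi>_def bij_mat_map_inverse(1)[OF M] by (simp add: row_kernel_def row_map_diff[OF lin2])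
    moreover have "y - y' \<in> Y"
      using C' \<open>y \<in> Y\<close> \<open>y' \<in> Y\<close> by (simp add: vs_complements_def pair.vs_subspace_diff)
    ultimately have "y - y' = 0"
      using pair.vs_complements_Int[OF C'] by blast
    then show "y = y'"
      by simp
  qed
  moreover have "\<chi> ` Y = point_kernel p"
  proof (intro equalityI subsetI)
    fix z assume "z \<in> \<chi> ` Y"
    then show "z \<in> point_kernel p"
      using bij_mat_map_inverse(1)[OF M] p_eq point_kernel_cyc[OF lin(1,2)]
      by (auto simp: \<chi>_def row_kernel_def mat_map_def)
  next
    fix z assume "z \<in> point_kernel p"
    then have z: "row_map a b z = 0"
      using p_eq point_kernel_cyc[OF lin(1,2)] by (simp add: row_kernel_def)
    obtain w where "row_map c d z = row_map a2 b2 w"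
      using surjD[OF row_map_surj(1)[OF M2]] by blast
    moreover obtain y k where "y \<in> Y" "k \<in> row_kernel a2 b2" "w = y + k"
      using pair.vs_complements_decomp[OF C'] .
    ultimately have "\<chi> y = ?N (mat_map a b c d z)"
      using z by (simp add: \<chi>_def mat_map_def row_kernel_def row_map_add[OF lin2])
    then show "z \<in> \<chi> ` Y"
      using \<open>y \<in> Y\<close> bij_mat_map_inverse(2)[OF M] by (metis image_eqI)
  qed
  ultimately show ?thesis
    unfolding vs_isomorphic_def by blast
qed

lemma dpath_three:
  assumes p: "p \<in> proj_line R" and q: "q \<in> proj_line R"
  shows "dpath R p q 3"
proof -
  obtain X Y where XY: "vs_complements (pair_sm sm) (point_kernel p) X" "vs_complements (pair_sm sm) X Y"
    "vs_complements (pair_sm sm) Y (point_kernel q)"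
    using pair.complements_chain[OF vs_subspace_point_kernel[OF p] vs_subspace_point_kernel[OF q]
        complement_isomorphic[OF p q] complement_isomorphic[OF q p]] .
  obtain x where x: "x \<in> proj_line R" "point_kernel x = X"
    using point_of_complement[OF p XY(1)] .
  obtain y where y: "y \<in> proj_line R" "point_kernel y = Y"
    using point_of_complement[OF q pair.vs_complements_sym[OF XY(3)]] .
  have "distant R p x" "distant R x y" "distant R y q"
    using distant_iff p q x y XY by auto
  then show ?thesis
    using q by (simp add: numeral_3_eq_3 dpath_Suc dpath_0) blast
qed

lemma nested_points_far:
  assumes p: "p \<in> proj_line R" and q: "q \<in> proj_line R"
    and nested: "point_kernel p \<subseteq> point_kernel q" "point_kernel p \<noteq> point_kernel q"
    and nonzero: "point_kernel p \<noteq> {0}"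
    and "m < 3"
  shows "\<not> dpath R p q m"
proof
  assume "dpath R p q m"
  moreover have "m = 0 \<or> m = 1 \<or> m = 2"
    using \<open>m < 3\<close> by arith
  ultimately consider "p = q" | "distant R p q" | x where "distant R p x" "distant R x q"
    by (auto simp: numeral_2_eq_2 dpath_Suc dpath_0)
  then show False
  proof cases
    case 1
    then show False
      using nested by simp
  next
    case 2
    then have "point_kernel p \<inter> point_kernel q = {0}"
      by (simp add: distant_iff vs_complements_def)
    then show False
      using nested nonzero by blast
  next
    case (3 x)
    then have "vs_complements (pair_sm sm) (point_kernel x) (point_kernel p)"
      "vs_complements (pair_sm sm) (point_kernel x) (point_kernel q)"
      using distant_iff pair.vs_complements_sym by auto
    then show False
      using pair.common_complement_eq nested by blast
  qed
qed

lemma nested_points_exist: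
  assumes "\<not> finite_dimensional_vs sm"
  obtains p q where "p \<in> proj_line R" "q \<in> proj_line R"
    "point_kernel p \<subseteq> point_kernel q" "point_kernel p \<noteq> point_kernel q" "point_kernel p \<noteq> {0}"
proof -
  obtain a n where a: "vs_linear sm a" "surj a" "a n = 0" "n \<noteq> 0"
    using surj_linear_map_with_kernel[OF assms] by blast
  obtain \<sigma> where \<sigma>: "vs_linear sm \<sigma>" "\<And>u. a (\<sigma> u) = u"
    using vs_linear_right_inverse[OF a(1,2)] by blast
  \<comment> \<open>the inverse of \<open>(x, y) \<mapsto> (a x, x + \<sigma> y)\<close>\<close>
  define g where "g w = (snd w - \<sigma> (a (snd w) - fst w), a (snd w) - fst w)" for w :: "'u \<times> 'u"
  have "mat_map a (\<lambda>_. 0) id \<sigma> \<circ> g = id"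
    using \<sigma>(2) vs_linear_diff[OF a(1)] by (auto simp: g_def mat_map_def row_map_def)
  moreover have "g \<circ> mat_map a (\<lambda>_. 0) id \<sigma> = id"
    using \<sigma>(2) vs_linear_add[OF a(1)] by (auto simp: g_def mat_map_def row_map_def)
  ultimately have "bij (mat_map a (\<lambda>_. 0) id \<sigma>)"
    using o_bij by blast
  then have q: "cyc R a (\<lambda>_. 0) \<in> proj_line R"
    unfolding proj_line_def admissible_iff using a(1) \<sigma>(1) vs_linear_id vs_linear_zero_map by blast
  have "bij (mat_map id (\<lambda>_. 0) (\<lambda>_. 0) id)"
    by (simp add: mat_map_id)
  then have p: "cyc R id (\<lambda>_. 0) \<in> proj_line R"
    unfolding proj_line_def admissible_iff using vs_linear_id vs_linear_zero_map by blast
  have P: "point_kernel (cyc R id (\<lambda>_. 0)) = {z. fst z = 0}"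
    using point_kernel_cyc[OF vs_linear_id vs_linear_zero_map] by (simp add: row_kernel_def row_map_def)
  have Q: "point_kernel (cyc R a (\<lambda>_. 0)) = {z. a (fst z) = 0}"
    using point_kernel_cyc[OF a(1) vs_linear_zero_map] by (simp add: row_kernel_def row_map_def)
  show thesis
  proof (rule that[OF p q])
    show "point_kernel (cyc R id (\<lambda>_. 0)) \<subseteq> point_kernel (cyc R a (\<lambda>_. 0))"
      unfolding P Q using vs_linear_zero[OF a(1)] by auto
    have "(n, 0) \<in> point_kernel (cyc R a (\<lambda>_. 0))" "(n, 0) \<notin> point_kernel (cyc R id (\<lambda>_. 0))"
      unfolding P Q using a(3,4) by simp_all
    then show "point_kernel (cyc R id (\<lambda>_. 0)) \<noteq> point_kernel (cyc R a (\<lambda>_. 0))"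
      by metis
    have "(0, n) \<in> point_kernel (cyc R id (\<lambda>_. 0))" "(0, n) \<notin> {0}"
      unfolding P using a(4) by (simp_all add: zero_prod_def)
    then show "point_kernel (cyc R id (\<lambda>_. 0)) \<noteq> {0}"
      by metis
  qed
qed

end

theorem mainTheorem8:
  fixes sm :: "'k::division_ring \<Rightarrow> 'u::ab_group_add \<Rightarrow> 'u"
  assumes "left_vector_space sm"
    and "\<not> finite_dimensional_vs sm"
  shows "proj_connected (End_ring sm) \<and> proj_diameter (End_ring sm) = 3"
proof -
  interpret end_ring sm
    using assms(1) unfolding end_ring_def left_vs_def left_vector_space_def by blast
  obtain p q where pq: "p \<in> proj_line R" "q \<in> proj_line R"
    "point_kernel p \<subseteq> point_kernel q" "point_kernel p \<noteq> point_kernel q" "point_kernel p \<noteq> {0}"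
    using nested_points_exist[OF assms(2)] .
  have "proj_connected R \<and> proj_diameter R = enat 3"
    by (rule proj_connected_diameter[OF dpath_three pq(1,2) nested_points_far[OF pq]])
  then show ?thesis
    by (simp add: numeral_eq_enat)
qed

end
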